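(* The language class $\mathbf{GRLOWJ}$ is a proper subset of the class $\mathbf{CS}$ of context-sensitive languages, i.e., $\mathbf{GRLOWJ}\subset\mathbf{CS}$.
   Context: $\mathbf{CS}$ is the class of context-sensitive languages (languages accepted by linear bounded automata). "Subword" means a contiguous factor. A GRLOWJFA is a tuple $\mathcal{A}=(\Sigma,Q,q_0,F,R)$ with $\Sigma$ a finite alphabet, $Q$ a finite state set, $q_0\in Q$, $F\subseteq Q$, and $R\subset Q\times\Sigma^+\times Q$ a finite set of rules such that for each $p\in Q$, $w\in\Sigma^+$ at most one $q$ has $(p,w,q)\in R$ (meaning: go from $p$ to $q$ deleting $w$). $\Sigma_p=\{w:(p,w,q)\in R\text{ for some }q\}$. Configurations lie in $\Sigma^*Q\Sigma^*$. Moves $\curvearrowright$: (1) for $t,u,v\in\Sigma^*$ and $(p,x,q)\in R$: $tpuxv\curvearrowright tuqv$ provided $u$ contains no word of $\Sigma_p$ as a subword and there are no $u_1,x_2\in\Sigma^*$, $u_2,x_1\in\Sigma^+$ with $u=u_1u_2$, $x=x_1x_2$, $u_2x_1=x$; (2) for $x\in\Sigma^+$, $y\in\Sigma^*$ with $y$ containing no word of $\Sigma_p$ as a subword: $xpy\curvearrowright pxy$. $L_{GRL}(\mathcal{A})=\{w\in\Sigma^*: q_0w\curvearrowright^* q_f \text{ for some } q_f\in F\}$. $\mathbf{GRLOWJ}$ is the class of languages so accepted. *)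

theory Defs
  imports Main "HOL-Library.Sublist"
begin

text \<open>"Subword" means a contiguous factor; this is sublist from HOL-Library.Sublist.\<close>

definition no_subword_in :: "'a list \<Rightarrow> 'a list set \<Rightarrow> bool" where
  "no_subword_in u W \<longleftrightarrow> (\<forall>w\<in>W. \<not> sublist w u)"

record ('a, 's) grlowjfa =
  alph :: "'a set"
  states :: "'s set"
  init :: 's
  finals :: "'s set"
  rules :: "('s \<times> 'a list \<times> 's) set"

definition wf_grlowjfa :: "('a, 's) grlowjfa \<Rightarrow> bool" where
  "wf_grlowjfa A \<longleftrightarrow>
     finite (alph A) \<and> finite (states A) \<and> init A \<in> states A \<and>
     finals A \<subseteq> states A \<and> finite (rules A) \<and>
     (\<forall>(p, w, q) \<in> rules A. p \<in> states A \<and> q \<in> states A \<and> w \<noteq> [] \<and> set w \<subseteq> alph A) \<and>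
     (\<forall>p w q q'. (p, w, q) \<in> rules A \<longrightarrow> (p, w, q') \<in> rules A \<longrightarrow> q = q')"

definition Sigma_p :: "('a, 's) grlowjfa \<Rightarrow> 's \<Rightarrow> 'a list set" where
  "Sigma_p A p = {w. \<exists>q. (p, w, q) \<in> rules A}"

text \<open>Configurations t p v are encoded as triples (t, p, v).\<close>

inductive grl_move :: "('a, 's) grlowjfa \<Rightarrow> ('a list \<times> 's \<times> 'a list) \<Rightarrow> ('a list \<times> 's \<times> 'a list) \<Rightarrow> bool"
  for A where
  jump_delete:
    "\<lbrakk> (p, x, q) \<in> rules A; no_subword_in u (Sigma_p A p);
       \<not> (\<exists>u1 u2 x1 x2. u = u1 @ u2 \<and> x = x1 @ x2 \<and> u2 \<noteq> [] \<and> x1 \<noteq> [] \<and> u2 @ x1 = x) \<rbrakk>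
     \<Longrightarrow> grl_move A (t, p, u @ x @ v) (t @ u, q, v)"
| jump_back:
    "\<lbrakk> x \<noteq> []; no_subword_in y (Sigma_p A p) \<rbrakk>
     \<Longrightarrow> grl_move A (x, p, y) ([], p, x @ y)"

definition L_GRL :: "('a, 's) grlowjfa \<Rightarrow> 'a list set" where
  "L_GRL A = {w \<in> lists (alph A). \<exists>qf \<in> finals A. (grl_move A)\<^sup>*\<^sup>* ([], init A, w) ([], qf, [])}"

definition GRLOWJ :: "'a list set set" where
  "GRLOWJ = {L. \<exists>A :: ('a, nat) grlowjfa. wf_grlowjfa A \<and> L = L_GRL A}"

text \<open>Nondeterministic one-tape Turing machine whose tape initially holds
  the input between a left and a right endmarker and which never leaves this
  region.  Tape symbols are of type 'a + nat: input letters are Inl a.\<close>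

record ('a, 's) lba =
  lba_states :: "'s set"
  lba_input :: "'a set"
  lba_tape :: "('a + nat) set"
  lba_lm :: "'a + nat"
  lba_rm :: "'a + nat"
  lba_delta :: "('s \<times> ('a + nat) \<times> 's \<times> ('a + nat) \<times> int) set"
  lba_init :: 's
  lba_finals :: "'s set"

definition wf_lba :: "('a, 's) lba \<Rightarrow> bool" where
  "wf_lba M \<longleftrightarrow>
     finite (lba_states M) \<and> finite (lba_input M) \<and> finite (lba_tape M) \<and>
     Inl ` lba_input M \<subseteq> lba_tape M \<and>
     lba_lm M \<in> lba_tape M - Inl ` lba_input M \<and> lba_rm M \<in> lba_tape M - Inl ` lba_input M \<and>
     lba_lm M \<noteq> lba_rm M \<and>
     lba_init M \<in> lba_states M \<and> lba_finals M \<subseteq> lba_states M \<and> finite (lba_delta M) \<and>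
     (\<forall>(p, a, q, b, d) \<in> lba_delta M.
        p \<in> lba_states M \<and> q \<in> lba_states M \<and> a \<in> lba_tape M \<and> b \<in> lba_tape M \<and>
        d \<in> {-1, 0, 1} \<and>
        (a = lba_lm M \<longrightarrow> b = lba_lm M \<and> d \<ge> 0) \<and>
        (a = lba_rm M \<longrightarrow> b = lba_rm M \<and> d \<le> 0) \<and>
        (a \<noteq> lba_lm M \<longrightarrow> b \<noteq> lba_lm M) \<and>
        (a \<noteq> lba_rm M \<longrightarrow> b \<noteq> lba_rm M))"

inductive lba_step :: "('a, 's) lba \<Rightarrow> ('s \<times> ('a + nat) list \<times> nat) \<Rightarrow> ('s \<times> ('a + nat) list \<times> nat) \<Rightarrow> bool"
  for M where
  "\<lbrakk> i < length tp; (p, tp ! i, q, b, d) \<in> lba_delta M;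
     0 \<le> int i + d; int i + d < int (length tp) \<rbrakk>
   \<Longrightarrow> lba_step M (p, tp, i) (q, tp[i := b], nat (int i + d))"

definition L_LBA :: "('a, 's) lba \<Rightarrow> 'a list set" where
  "L_LBA M = {w \<in> lists (lba_input M). \<exists>q tp i. q \<in> lba_finals M \<and>
      (lba_step M)\<^sup>*\<^sup>* (lba_init M, [lba_lm M] @ map Inl w @ [lba_rm M], 0) (q, tp, i)}"

definition CS :: "'a list set set" where
  "CS = {L. \<exists>M :: ('a, nat) lba. wf_lba M \<and> L = L_LBA M}"

end

theory Submission
  imports Defs "HOL-Library.Countable"
begin

(* On a one-letter input a GRLOWJFA can never skip a letter, so it acts as a counter
   automaton that subtracts rule lengths; pigeonhole on the states of a long accepting run
   yields a loop, whence every accepted long unary word lies in an infinite arithmetic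
   progression of accepted words.  The powers of two contain no such progression, yet a linear
   bounded automaton recognises them by repeatedly halving the number of letters.
   Conversely, an LBA simulates a GRLOWJFA on its own tape: deleted letters are overwritten
   by blanks, the head marks the position up to which the automaton has jumped, and the side
   conditions of a move only involve the last K letters read, K the maximal rule length,
   which fit into the finite control. *)

abbreviation blank :: "'a + nat" where "blank \<equiv> Inr 0"
abbreviation lmark :: "'a + nat" where "lmark \<equiv> Inr 1"
abbreviation rmark :: "'a + nat" where "rmark \<equiv> Inr 2"

lemma lba_step_right:
  assumes "Suc i < length tp" "(p, tp ! i, q, b, 1) \<in> lba_delta M"
  shows "lba_step M (p, tp, i) (q, tp[i := b], Suc i)"
proof -
  have "lba_step M (p, tp, i) (q, tp[i := b], nat (int i + 1))"
    by (rule lba_step.intros) (use assms in auto)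
  moreover have "nat (int i + 1) = Suc i" by arith
  ultimately show ?thesis by simp
qed

lemma lba_step_right_read:
  "Suc i < length tp \<Longrightarrow> (p, tp ! i, q, tp ! i, 1) \<in> lba_delta M \<Longrightarrow> lba_step M (p, tp, i) (q, tp, Suc i)"
  using lba_step_right[of i tp p q "tp ! i" M] by simp

lemma lba_step_left_read:
  assumes "Suc k < length tp" "(p, tp ! Suc k, q, tp ! Suc k, -1) \<in> lba_delta M"
  shows "lba_step M (p, tp, Suc k) (q, tp, k)"
proof -
  have "lba_step M (p, tp, Suc k) (q, tp[Suc k := tp ! Suc k], nat (int (Suc k) + -1))"
    by (rule lba_step.intros) (use assms in auto)
  then show ?thesis by simp
qed

lemma lba_step_stay_read:
  assumes "i < length tp" "(p, tp ! i, q, tp ! i, 0) \<in> lba_delta M"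
  shows "lba_step M (p, tp, i) (q, tp, i)"
proof -
  have "lba_step M (p, tp, i) (q, tp[i := tp ! i], nat (int i + 0))"
    by (rule lba_step.intros) (use assms in auto)
  then show ?thesis by simp
qed

lemma lba_run_left:
  assumes "i < length tp" "\<And>k. 0 < k \<Longrightarrow> k \<le> i \<Longrightarrow> (p, tp ! k, p, tp ! k, -1) \<in> lba_delta M"
  shows "(lba_step M)\<^sup>*\<^sup>* (p, tp, i) (p, tp, 0)"
  using assms
proof (induction i)
  case (Suc k)
  then have "lba_step M (p, tp, Suc k) (p, tp, k)" by (intro lba_step_left_read) auto
  with Suc show ?case by (simp add: converse_rtranclp_into_rtranclp)
qed simp

definition rename_lba_states :: "('s \<Rightarrow> 't) \<Rightarrow> ('a, 's) lba \<Rightarrow> ('a, 't) lba" where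
  "rename_lba_states f M = \<lparr> lba_states = f ` lba_states M, lba_input = lba_input M,
     lba_tape = lba_tape M, lba_lm = lba_lm M, lba_rm = lba_rm M,
     lba_delta = (\<lambda>(p, a, q, b, d). (f p, a, f q, b, d)) ` lba_delta M,
     lba_init = f (lba_init M), lba_finals = f ` lba_finals M \<rparr>"

lemma wf_rename_lba_states:
  assumes "wf_lba M"
  shows "wf_lba (rename_lba_states f M)"
  using assms unfolding wf_lba_def rename_lba_states_def by (fastforce simp: image_mono)

lemma lba_step_rename_states:
  assumes "lba_step M c c'"
  shows "lba_step (rename_lba_states f M) (apfst f c) (apfst f c')"
  using assms
proof cases
  case (1 i tp p q b d)
  then have "(f p, tp ! i, f q, b, d) \<in> lba_delta (rename_lba_states f M)"
    unfolding rename_lba_states_def by force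
  then show ?thesis using 1 by (auto intro: lba_step.intros)
qed

lemma lba_steps_rename_states:
  assumes "(lba_step M)\<^sup>*\<^sup>* c c'"
  shows "(lba_step (rename_lba_states f M))\<^sup>*\<^sup>* (apfst f c) (apfst f c')"
  using assms
  by (induction rule: rtranclp_induct) (auto intro: rtranclp.rtrancl_into_rtrancl lba_step_rename_states)

lemma lba_step_rename_statesD:
  assumes "lba_step (rename_lba_states f M) (f p, tp, i) c'" "inj f"
  shows "\<exists>q. fst c' = f q \<and> lba_step M (p, tp, i) (q, snd c')"
  using assms(1)
proof cases
  case (1 q' b d)
  then obtain p0 q where "(p0, tp ! i, q, b, d) \<in> lba_delta M" "f p = f p0" "q' = f q"
    unfolding rename_lba_states_def by auto
  with 1 assms(2) show ?thesis
    by (auto simp: inj_eq intro: lba_step.intros)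
qed

lemma lba_steps_rename_statesD:
  assumes "(lba_step (rename_lba_states f M))\<^sup>*\<^sup>* (f p, x) c'" "inj f"
  shows "\<exists>q. fst c' = f q \<and> (lba_step M)\<^sup>*\<^sup>* (p, x) (q, snd c')"
  using assms(1)
proof (induction rule: rtranclp_induct)
  case (step y z)
  then obtain q where "fst y = f q" "(lba_step M)\<^sup>*\<^sup>* (p, x) (q, snd y)" by blast
  with lba_step_rename_statesD[of f M q "fst (snd y)" "snd (snd y)" z] step.hyps(2) assms(2)
  show ?case
    by (metis prod.collapse rtranclp.rtrancl_into_rtrancl)
qed auto

lemma L_LBA_rename_states:
  assumes "inj f"
  shows "L_LBA (rename_lba_states f M) = L_LBA M"
proof (intro set_eqI iffI)
  fix w
  let ?tp = "[lba_lm M] @ map Inl w @ [lba_rm M]"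
  assume "w \<in> L_LBA (rename_lba_states f M)"
  then obtain q tp i where "w \<in> lists (lba_input M)" "q \<in> lba_finals M"
    "(lba_step (rename_lba_states f M))\<^sup>*\<^sup>* (f (lba_init M), ?tp, 0) (f q, tp, i)"
    unfolding L_LBA_def rename_lba_states_def by auto
  with lba_steps_rename_statesD[of f M "lba_init M" "(?tp, 0)" "(f q, tp, i)"] assms
  show "w \<in> L_LBA M"
    unfolding L_LBA_def by (auto simp: inj_eq)
next
  fix w
  assume "w \<in> L_LBA M"
  then show "w \<in> L_LBA (rename_lba_states f M)"
    unfolding L_LBA_def using lba_steps_rename_states[of M _ _ f]
    by (fastforce simp: rename_lba_states_def)
qed

lemma L_LBA_in_CS:
  fixes M :: "('a, 's :: countable) lba"
  assumes "wf_lba M"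
  shows "L_LBA M \<in> CS"
proof -
  let ?M = "rename_lba_states (to_nat :: 's \<Rightarrow> nat) M"
  have "wf_lba ?M" "L_LBA ?M = L_LBA M"
    using assms by (simp_all add: wf_rename_lba_states L_LBA_rename_states)
  then show ?thesis unfolding CS_def by blast
qed

definition max_rule_length :: "('a, 's) grlowjfa \<Rightarrow> nat" where
  "max_rule_length A = Max (insert 0 ((\<lambda>(p, w, q). length w) ` rules A))"

lemma rule_length_le_max:
  assumes "wf_grlowjfa A" "(p, w, q) \<in> rules A"
  shows "length w \<le> max_rule_length A"
proof -
  have "finite (rules A)" using assms(1) unfolding wf_grlowjfa_def by blast
  moreover have "length w \<in> (\<lambda>(p, w, q). length w) ` rules A" using assms(2) by force
  ultimately show ?thesis unfolding max_rule_length_def by (intro Max_ge) auto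
qed

lemma rule_wf:
  assumes "wf_grlowjfa A" "(p, w, q) \<in> rules A"
  shows "p \<in> states A" "q \<in> states A" "w \<noteq> []" "set w \<subseteq> alph A"
  using assms unfolding wf_grlowjfa_def by blast+

lemma no_subword_in_Nil:
  assumes "wf_grlowjfa A"
  shows "no_subword_in [] (Sigma_p A p)"
  using assms unfolding no_subword_in_def Sigma_p_def wf_grlowjfa_def by auto

section \<open>GRLOWJFAs on unary inputs\<close>

text \<open>On the unary input a^m, the pair (p, m) stands for the configuration p a^m.\<close>

definition unary_step :: "('a, 's) grlowjfa \<Rightarrow> 'a \<Rightarrow> 's \<times> nat \<Rightarrow> 's \<times> nat \<Rightarrow> bool" where
  "unary_step A a c c' \<longleftrightarrow> (\<exists>k \<ge> 1. (fst c, replicate k a, fst c') \<in> rules A \<and> snd c = k + snd c')"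

lemma append_eq_replicateD:
  assumes "xs @ ys = replicate n a"
  shows "xs = replicate (length xs) a" "ys = replicate (length ys) a"
proof -
  have "\<forall>y \<in> set xs. y = a" "\<forall>y \<in> set ys. y = a"
    using assms by (metis Un_iff in_set_replicate set_append)+
  then show "xs = replicate (length xs) a" "ys = replicate (length ys) a"
    by (simp_all add: replicate_length_same)
qed

text \<open>On a unary input nothing can be skipped: a nonempty skipped prefix would contain the
  deleted word if that has length one, and overlap with it otherwise.\<close>

lemma grl_move_unary:
  assumes wf: "wf_grlowjfa A" and mv: "grl_move A ([], p, replicate m a) c'"
  shows "\<exists>q m'. c' = ([], q, replicate m' a) \<and> unary_step A a (p, m) (q, m')"
  using mv
proof cases
  case (jump_delete x q u v)
  have "x \<noteq> []" using rule_wf[OF wf jump_delete(3)] by simp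
  have eq: "u @ x @ v = replicate m a" using jump_delete(1) by simp
  have "u = replicate (length u) a" "x @ v = replicate (length (x @ v)) a"
    using append_eq_replicateD[OF eq] by simp_all
  then have "u = replicate (length u) a" "x = replicate (length x) a" "v = replicate (length v) a"
    using append_eq_replicateD[of x v] by simp_all
  then obtain lu lx lv where u: "u = replicate lu a" and x: "x = replicate lx a" and v: "v = replicate lv a"
    by blast
  have "lx \<ge> 1" using \<open>x \<noteq> []\<close> x by (cases lx) auto
  have "lu = 0"
  proof (rule ccontr)
    assume "lu \<noteq> 0"
    then have u_snoc: "u = replicate (lu - 1) a @ [a]"
      using u by (cases lu) (simp_all add: replicate_append_same)
    show False
    proof (cases "lx = 1")
      case True
      then have "sublist x u" using u_snoc x by simp
      then show False using jump_delete(3,4) unfolding no_subword_in_def Sigma_p_def by blast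
    next
      case False
      then have "x = replicate (lx - 1) a @ [a]" "[a] @ replicate (lx - 1) a = x" "replicate (lx - 1) a \<noteq> []"
        using x \<open>lx \<ge> 1\<close> by (cases lx; simp add: replicate_append_same)+
      then show False using jump_delete(5) u_snoc by blast
    qed
  qed
  moreover have "m = lx + lv"
    using arg_cong[OF eq, of length] u x v \<open>lu = 0\<close> by simp
  ultimately show ?thesis
    using jump_delete(2,3) \<open>lx \<ge> 1\<close> u x v unfolding unary_step_def by auto
qed simp

lemma grl_move_of_unary_step:
  assumes "wf_grlowjfa A" "unary_step A a (p, m) (q, m')"
  shows "grl_move A ([], p, replicate m a) ([], q, replicate m' a)"
proof -
  obtain k where "(p, replicate k a, q) \<in> rules A" "m = k + m'"
    using assms(2) unfolding unary_step_def by auto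
  then show ?thesis
    using jump_delete[of p "replicate k a" q A "[]" "[]" "replicate m' a"] no_subword_in_Nil[OF assms(1)]
    by (simp add: replicate_add)
qed

lemma grl_steps_unary_iff:
  assumes "wf_grlowjfa A"
  shows "(grl_move A)\<^sup>*\<^sup>* ([], p, replicate m a) ([], q, replicate m' a) \<longleftrightarrow>
    (unary_step A a)\<^sup>*\<^sup>* (p, m) (q, m')"
proof
  have "\<exists>q m'. c = ([], q, replicate m' a) \<and> (unary_step A a)\<^sup>*\<^sup>* (p, m) (q, m')"
    if "(grl_move A)\<^sup>*\<^sup>* ([], p, replicate m a) c" for c
    using that
  proof (induction rule: rtranclp_induct)
    case (step y z)
    then obtain q m' where "y = ([], q, replicate m' a)" "(unary_step A a)\<^sup>*\<^sup>* (p, m) (q, m')"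
      by blast
    with grl_move_unary[OF assms] step.hyps(2) show ?case
      by (blast intro: rtranclp.rtrancl_into_rtrancl)
  qed blast
  then show "(grl_move A)\<^sup>*\<^sup>* ([], p, replicate m a) ([], q, replicate m' a) \<Longrightarrow>
      (unary_step A a)\<^sup>*\<^sup>* (p, m) (q, m')"
    by (metis length_replicate prod.inject)
next
  show "(unary_step A a)\<^sup>*\<^sup>* (p, m) (q, m') \<Longrightarrow>
      (grl_move A)\<^sup>*\<^sup>* ([], p, replicate m a) ([], q, replicate m' a)"
    by (induction rule: rtranclp_induct2)
      (auto intro: rtranclp.rtrancl_into_rtrancl grl_move_of_unary_step[OF assms])
qed

lemma unary_steps_shift:
  assumes "(unary_step A a)\<^sup>*\<^sup>* (p, m) (q, m')"
  shows "(unary_step A a)\<^sup>*\<^sup>* (p, m + d) (q, m' + d)"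
  using assms
  by (induction rule: rtranclp_induct2) (auto simp: unary_step_def intro: rtranclp.rtrancl_into_rtrancl)

lemma unary_steps_pump:
  assumes "(unary_step A a)\<^sup>*\<^sup>* (p, m + c) (p, m)"
  shows "(unary_step A a)\<^sup>*\<^sup>* (p, m + d * c) (p, m)"
proof (induction d)
  case (Suc d)
  have "(unary_step A a)\<^sup>*\<^sup>* (p, m + c + d * c) (p, m + d * c)"
    using unary_steps_shift[OF assms] by simp
  with Suc show ?case by (simp add: ac_simps)
qed simp

lemma unary_steps_counter_mono:
  assumes "(unary_step A a)\<^sup>*\<^sup>* c c'"
  shows "snd c' \<le> snd c"
  using assms by (induction rule: rtranclp_induct) (auto simp: unary_step_def)

lemma unary_relpowp_counter_bound:
  assumes "wf_grlowjfa A" "(unary_step A a ^^ j) c c'"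
  shows "snd c \<le> j * max_rule_length A + snd c'"
  using assms(2)
proof (induction j arbitrary: c')
  case (Suc j)
  then obtain y where y: "(unary_step A a ^^ j) c y" "unary_step A a y c'" by auto
  then obtain k where "(fst y, replicate k a, fst c') \<in> rules A" "snd y = k + snd c'"
    unfolding unary_step_def by blast
  then have "snd y \<le> max_rule_length A + snd c'"
    using rule_length_le_max[OF assms(1)] by fastforce
  with Suc.IH[OF y(1)] show ?case by simp
qed simp

lemma path_rtranclp:
  assumes "\<forall>i<j. R (g i) (g (Suc i))" "a \<le> b" "b \<le> j"
  shows "R\<^sup>*\<^sup>* (g a) (g b)"
  using assms(2,3)
proof (induction b)
  case (Suc b)
  with assms(1) show ?case
    by (cases "a = Suc b") (auto intro: rtranclp.rtrancl_into_rtrancl)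
qed simp

lemma pigeonhole_sequence:
  assumes "\<And>i. i \<le> j \<Longrightarrow> f i \<in> S" "finite S" "card S \<le> j"
  obtains i1 i2 where "i1 < i2" "i2 \<le> j" "f i1 = f i2"
proof -
  have "card (f ` {0..j}) \<le> card S"
    using assms(1,2) by (intro card_mono) auto
  then have "\<not> inj_on f {0..j}"
    using assms(3) card_image[of f "{0..j}"] by auto
  then obtain k l where "k \<le> j" "l \<le> j" "k \<noteq> l" "f k = f l"
    unfolding inj_on_def by auto
  then show ?thesis using that[of k l] that[of l k] by (cases "k < l") auto
qed

text \<open>Each step deletes at most max_rule_length A letters, so a run on a long enough unary word
  has more steps than A has states.\<close>

lemma unary_steps_repeat_state:
  assumes wf: "wf_grlowjfa A" and run: "(unary_step A a)\<^sup>*\<^sup>* (init A, n) (qf, 0)"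
    and long: "card (states A) * max_rule_length A < n"
  obtains p m c where "c \<ge> 1" "(unary_step A a)\<^sup>*\<^sup>* (init A, n) (p, m + c)"
    "(unary_step A a)\<^sup>*\<^sup>* (p, m + c) (p, m)" "(unary_step A a)\<^sup>*\<^sup>* (p, m) (qf, 0)"
proof -
  obtain j where j: "(unary_step A a ^^ j) (init A, n) (qf, 0)"
    using run by (metis rtranclp_power)
  then obtain g where g: "g 0 = (init A, n)" "g j = (qf, 0)" "\<forall>i<j. unary_step A a (g i) (g (Suc i))"
    unfolding relpowp_fun_conv by blast
  have "n \<le> j * max_rule_length A"
    using unary_relpowp_counter_bound[OF wf j] by simp
  with long have "card (states A) * max_rule_length A < j * max_rule_length A"
    by linarith
  then have "card (states A) \<le> j"
    by (simp add: mult_less_cancel2)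
  moreover have "fst (g i) \<in> states A" if "i \<le> j" for i
  proof (cases i)
    case 0
    then show ?thesis using g(1) wf unfolding wf_grlowjfa_def by simp
  next
    case (Suc i')
    then have "unary_step A a (g i') (g i)" using g(3) that by simp
    then show ?thesis using rule_wf(2)[OF wf] unfolding unary_step_def by blast
  qed
  moreover have "finite (states A)" using wf unfolding wf_grlowjfa_def by blast
  ultimately obtain i1 i2 where i12: "i1 < i2" "i2 \<le> j" "fst (g i1) = fst (g i2)"
    using pigeonhole_sequence[of j "fst \<circ> g" "states A"] by auto
  have "snd (g i2) < snd (g i1)"
  proof -
    have "unary_step A a (g i1) (g (Suc i1))" using g(3) i12 by simp
    then have "snd (g (Suc i1)) < snd (g i1)" unfolding unary_step_def by auto
    moreover have "(unary_step A a)\<^sup>*\<^sup>* (g (Suc i1)) (g i2)"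
      using path_rtranclp[where R="unary_step A a", OF g(3)] i12 by simp
    then have "snd (g i2) \<le> snd (g (Suc i1))"
      by (rule unary_steps_counter_mono)
    ultimately show ?thesis by simp
  qed
  define p m c where "p = fst (g i1)" and "m = snd (g i2)" and "c = snd (g i1) - snd (g i2)"
  have gi: "g i1 = (p, m + c)" "g i2 = (p, m)"
    using i12(3) \<open>snd (g i2) < snd (g i1)\<close> unfolding p_def m_def c_def by (simp_all add: prod_eq_iff)
  note path = path_rtranclp[where R="unary_step A a", OF g(3)]
  show ?thesis
  proof (rule that)
    show "c \<ge> 1" using \<open>snd (g i2) < snd (g i1)\<close> unfolding c_def by simp
    show "(unary_step A a)\<^sup>*\<^sup>* (init A, n) (p, m + c)"
      using path[of 0 i1] i12 g(1) gi by simp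
    show "(unary_step A a)\<^sup>*\<^sup>* (p, m + c) (p, m)"
      using path[of i1 i2] i12 gi by simp
    show "(unary_step A a)\<^sup>*\<^sup>* (p, m) (qf, 0)"
      using path[of i2 j] i12 g(2) gi by simp
  qed
qed

lemma unary_GRL_pumping:
  assumes wf: "wf_grlowjfa A" and acc: "replicate n a \<in> L_GRL A"
    and long: "card (states A) * max_rule_length A < n"
  obtains c where "c \<ge> 1" "\<And>d. replicate (n + d * c) a \<in> L_GRL A"
proof -
  obtain qf where qf: "qf \<in> finals A" "(unary_step A a)\<^sup>*\<^sup>* (init A, n) (qf, 0)"
    and "replicate n a \<in> lists (alph A)"
    using acc grl_steps_unary_iff[OF wf, of "init A" n a _ 0] unfolding L_GRL_def by auto
  then have "a \<in> alph A" using long by (cases n) auto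
  obtain p m c where c: "c \<ge> 1" "(unary_step A a)\<^sup>*\<^sup>* (init A, n) (p, m + c)"
    "(unary_step A a)\<^sup>*\<^sup>* (p, m + c) (p, m)" "(unary_step A a)\<^sup>*\<^sup>* (p, m) (qf, 0)"
    using unary_steps_repeat_state[OF wf qf(2) long] by blast
  have "(unary_step A a)\<^sup>*\<^sup>* (init A, n + d * c) (qf, 0)" for d
  proof -
    have "(unary_step A a)\<^sup>*\<^sup>* (init A, n + d * c) (p, m + Suc d * c)"
      using unary_steps_shift[OF c(2), of "d * c"] by (simp add: add.assoc)
    also have "(unary_step A a)\<^sup>*\<^sup>* \<dots> (p, m)"
      by (rule unary_steps_pump[OF c(3)])
    finally show ?thesis using c(4) by simp
  qed
  then have "replicate (n + d * c) a \<in> L_GRL A" for d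
    using qf(1) \<open>a \<in> alph A\<close> grl_steps_unary_iff[OF wf, of "init A" "n + d * c" a qf 0]
    unfolding L_GRL_def by auto
  then show ?thesis by (rule that[OF c(1)])
qed

definition powers_of_two :: "nat list set" where
  "powers_of_two = {replicate (2 ^ k) 0 | k. True}"

lemma powers_of_two_not_GRLOWJ: "powers_of_two \<notin> GRLOWJ"
proof
  assume "powers_of_two \<in> GRLOWJ"
  then obtain A :: "(nat, nat) grlowjfa" where wf: "wf_grlowjfa A" and L: "L_GRL A = powers_of_two"
    unfolding GRLOWJ_def by blast
  define n :: nat where "n = 2 ^ (card (states A) * max_rule_length A + 1)"
  have "replicate n 0 \<in> L_GRL A"
    unfolding L powers_of_two_def n_def by blast
  moreover have "card (states A) * max_rule_length A < n"
    unfolding n_def by (metis Suc_eq_plus1 Suc_lessD less_exp)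
  ultimately obtain c where "c \<ge> 1" "\<And>d. replicate (n + d * c) 0 \<in> L_GRL A"
    using unary_GRL_pumping[OF wf] by blast
  have "\<exists>e. n + d * c = 2 ^ e" for d
  proof -
    obtain e where "replicate (n + d * c) 0 = replicate (2 ^ e) (0::nat)"
      using \<open>replicate (n + d * c) 0 \<in> L_GRL A\<close> unfolding L powers_of_two_def by blast
    then show ?thesis by (metis length_replicate)
  qed
  then obtain a b where ab: "n + 1 * c = 2 ^ a" "n + 2 * c = 2 ^ b"
    by blast
  then have "(2::nat) ^ a < 2 ^ b" using \<open>c \<ge> 1\<close> by linarith
  then have "a < b" by simp
  then have "(2::nat) ^ Suc a \<le> 2 ^ b"
    by (intro power_increasing) auto
  then have "2 * 2 ^ a \<le> (2::nat) ^ b" by simp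
  with ab have "2 * (n + c) \<le> n + 2 * c" by simp
  moreover have "n > 0" unfolding n_def by simp
  ultimately show False by simp
qed

section \<open>Powers of two are context-sensitive\<close>

lemma count_list_take_Suc:
  "i < length xs \<Longrightarrow> count_list (take (Suc i) xs) x = count_list (take i xs) x + (if xs ! i = x then 1 else 0)"
  by (simp add: take_Suc_conv_app_nth)

lemma count_list_drop_nth:
  "i < length xs \<Longrightarrow> count_list (drop i xs) x = (if xs ! i = x then 1 else 0) + count_list (drop (Suc i) xs) x"
  by (simp add: Cons_nth_drop_Suc[symmetric])

text \<open>State 0 returns to the left end marker.  Each following sweep to the right keeps the first,
  third, fifth, \<dots> remaining letter and blanks out the others, so the number of letters is halved
  (rounded up).  The sweep state records how many letters it has met: none (1), exactly one (2),
  an even (3) or odd (4) number of at least two.  At the right end marker the machine accepts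
  (state 5) after exactly one letter and starts the next round after an even number.\<close>

definition halving_delta :: "(nat \<times> (nat + nat) \<times> nat \<times> (nat + nat) \<times> int) set" where
  "halving_delta = {(0, lmark, 1, lmark, 1), (0, Inl 0, 0, Inl 0, -1), (0, blank, 0, blank, -1),
     (1, blank, 1, blank, 1), (2, blank, 2, blank, 1), (3, blank, 3, blank, 1), (4, blank, 4, blank, 1),
     (1, Inl 0, 2, Inl 0, 1), (2, Inl 0, 3, blank, 1), (3, Inl 0, 4, Inl 0, 1), (4, Inl 0, 3, blank, 1),
     (2, rmark, 5, rmark, 0), (3, rmark, 0, rmark, -1)}"

definition halving_lba :: "(nat, nat) lba" where
  "halving_lba = \<lparr> lba_states = {0..5}, lba_input = {0}, lba_tape = {Inl 0, blank, lmark, rmark},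
     lba_lm = lmark, lba_rm = rmark, lba_delta = halving_delta, lba_init = 0, lba_finals = {5} \<rparr>"

lemma wf_halving_lba: "wf_lba halving_lba"
  unfolding wf_lba_def halving_lba_def halving_delta_def by auto

definition sweep_state :: "nat \<Rightarrow> nat" where
  "sweep_state s = (if s = 0 then 1 else if s = 1 then 2 else if even s then 3 else 4)"

lemma sweep_state_simps:
  "sweep_state s \<noteq> 0" "sweep_state s \<noteq> 5"
  "sweep_state s = 2 \<longleftrightarrow> s = 1" "sweep_state s = 3 \<longleftrightarrow> s \<ge> 2 \<and> even s"
  unfolding sweep_state_def by auto

lemma return_delta_iff:
  "(0, c, q', b, d) \<in> halving_delta \<longleftrightarrow>
    (c = lmark \<and> q' = sweep_state 0 \<and> b = c \<and> d = 1) \<or> (c \<in> {Inl 0, blank} \<and> q' = 0 \<and> b = c \<and> d = -1)"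
  unfolding halving_delta_def sweep_state_def by auto

lemma sweep_delta_blank_iff:
  "(sweep_state s, blank, q', b, d) \<in> halving_delta \<longleftrightarrow> q' = sweep_state s \<and> b = blank \<and> d = 1"
  unfolding halving_delta_def sweep_state_def by auto

definition sweep_write :: "nat \<Rightarrow> nat + nat" where
  "sweep_write s = (if even s then Inl 0 else blank)"

lemma sweep_delta_letter_iff:
  "(sweep_state s, Inl 0, q', b, d) \<in> halving_delta \<longleftrightarrow>
    q' = sweep_state (Suc s) \<and> b = sweep_write s \<and> d = 1"
  unfolding halving_delta_def sweep_state_def sweep_write_def by auto

lemma sweep_delta_rmark_iff:
  "(sweep_state s, rmark, q', b, d) \<in> halving_delta \<longleftrightarrow>
    (s = 1 \<and> q' = 5 \<and> b = rmark \<and> d = 0) \<or> (s \<ge> 2 \<and> even s \<and> q' = 0 \<and> b = rmark \<and> d = -1)"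
  unfolding halving_delta_def sweep_state_def by auto

definition halving_tape :: "nat \<Rightarrow> (nat + nat) list \<Rightarrow> bool" where
  "halving_tape n tp \<longleftrightarrow> (\<exists>cs. tp = lmark # cs @ [rmark] \<and> set cs \<subseteq> {Inl 0, blank} \<and> length cs = n)"

lemma halving_tape_length: "halving_tape n tp \<Longrightarrow> length tp = n + 2"
  unfolding halving_tape_def by auto

lemma halving_tape_nth:
  assumes "halving_tape n tp" "i < length tp"
  obtains "i = 0" "tp ! i = lmark" | "i = n + 1" "tp ! i = rmark"
    | "1 \<le> i" "i \<le> n" "tp ! i = Inl 0" | "1 \<le> i" "i \<le> n" "tp ! i = blank"
proof -
  obtain cs where cs: "tp = lmark # cs @ [rmark]" "set cs \<subseteq> {Inl 0, blank}" "length cs = n"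
    using assms(1) unfolding halving_tape_def by blast
  show ?thesis
  proof (cases i)
    case 0
    then show ?thesis using cs that by simp
  next
    case (Suc k)
    show ?thesis
    proof (cases "k < n")
      case True
      then have "tp ! i = cs ! k" "cs ! k \<in> {Inl 0, blank}"
        using cs Suc nth_mem by (auto simp: nth_append)
      then show ?thesis using Suc True that by auto
    next
      case False
      then have "k = n" using assms(2) cs Suc by simp
      then show ?thesis using cs Suc that by (simp add: nth_append)
    qed
  qed
qed

lemma halving_tape_update:
  assumes "halving_tape n tp" "tp ! i = Inl 0" "i < length tp"
  shows "halving_tape n (tp[i := blank])"
proof -
  obtain cs where cs: "tp = lmark # cs @ [rmark]" "set cs \<subseteq> {Inl 0, blank}" "length cs = n"
    using assms(1) unfolding halving_tape_def by blast
  have "1 \<le> i \<and> i \<le> n"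
    by (rule halving_tape_nth[OF assms(1,3)]) (use assms(2) in auto)
  then obtain k where k: "i = Suc k" "k < n" by (cases i) auto
  have "tp[i := blank] = lmark # cs[k := blank] @ [rmark]" using cs k by (simp add: list_update_append)
  moreover have "set (cs[k := blank]) \<subseteq> {Inl 0, blank}"
    using cs(2) set_update_subset_insert[of cs k blank] by auto
  ultimately show ?thesis unfolding halving_tape_def using cs by auto
qed

abbreviation num_letters :: "(nat + nat) list \<Rightarrow> nat" where
  "num_letters tp \<equiv> count_list tp (Inl 0)"

text \<open>The input length n is the number of remaining letters times a power of two; during a sweep
  the s letters already met count as remaining, and (s + 1) div 2 of them are kept.\<close>

definition halving_inv :: "nat \<Rightarrow> nat \<times> (nat + nat) list \<times> nat \<Rightarrow> bool" where
  "halving_inv n = (\<lambda>(q, tp, i). halving_tape n tp \<and> i < length tp \<and>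
     ((q = 0 \<and> i \<le> n \<and> (\<exists>j. num_letters tp * 2 ^ j = n)) \<or>
      (\<exists>s j. q = sweep_state s \<and> 1 \<le> i \<and> (s + num_letters (drop i tp)) * 2 ^ j = n \<and>
         num_letters (take i tp) = (s + 1) div 2) \<or>
      (q = 5 \<and> (\<exists>j. n = 2 ^ j))))"

lemma halving_invI_return:
  "halving_tape n tp \<Longrightarrow> i \<le> n \<Longrightarrow> num_letters tp * 2 ^ j = n \<Longrightarrow> halving_inv n (0, tp, i)"
  unfolding halving_inv_def using halving_tape_length by fastforce

lemma halving_invI_sweep:
  "halving_tape n tp \<Longrightarrow> i < length tp \<Longrightarrow> 1 \<le> i \<Longrightarrow> (s + num_letters (drop i tp)) * 2 ^ j = n \<Longrightarrow>
    num_letters (take i tp) = (s + 1) div 2 \<Longrightarrow> halving_inv n (sweep_state s, tp, i)"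
  unfolding halving_inv_def by blast

lemma halving_invI_accept:
  "halving_tape n tp \<Longrightarrow> i < length tp \<Longrightarrow> n = 2 ^ j \<Longrightarrow> halving_inv n (5, tp, i)"
  unfolding halving_inv_def by blast

lemma halving_return_step:
  assumes tape: "halving_tape n tp" and "i < length tp" "i \<le> n" and count: "num_letters tp * 2 ^ j = n"
    and step: "lba_step halving_lba (0, tp, i) (q', tp', i')"
  shows "halving_inv n (q', tp', i')"
  using step
proof cases
  case (1 b d)
  then have "(tp ! i = lmark \<and> q' = sweep_state 0 \<and> b = tp ! i \<and> d = 1) \<or>
      (tp ! i \<in> {Inl 0, blank} \<and> q' = 0 \<and> b = tp ! i \<and> d = -1)"
    using return_delta_iff[of "tp ! i" q' b d] by (simp add: halving_lba_def)
  then show ?thesis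
  proof (elim disjE conjE)
    assume "tp ! i = lmark" "q' = sweep_state 0" "b = tp ! i" "d = 1"
    moreover have "i = 0"
      by (rule halving_tape_nth[OF tape \<open>i < length tp\<close>]) (use \<open>tp ! i = lmark\<close> in auto)
    moreover have "num_letters (drop 1 tp) = num_letters tp" "num_letters (take 1 tp) = 0"
      using \<open>tp ! i = lmark\<close> \<open>i = 0\<close> \<open>i < length tp\<close> count_list_drop_nth[of 0 tp "Inl 0"]
        count_list_take_Suc[of 0 tp "Inl 0"] by simp_all
    ultimately have "halving_inv n (sweep_state 0, tp, 1)"
      using count tape halving_tape_length[OF tape] by (intro halving_invI_sweep[where j = j]) auto
    moreover have "tp' = tp" "i' = 1" using 1 \<open>b = tp ! i\<close> \<open>d = 1\<close> \<open>i = 0\<close> by simp_all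
    ultimately show ?thesis using \<open>q' = sweep_state 0\<close> by simp
  next
    assume "q' = 0" "b = tp ! i" "d = -1"
    then show ?thesis using 1 tape \<open>i \<le> n\<close> count by (auto intro: halving_invI_return)
  qed
qed

lemma halving_sweep_letter:
  assumes tape: "halving_tape n tp" and letter: "tp ! i = Inl 0" and "i < length tp"
  shows "halving_tape n (tp[i := sweep_write s])"
    "num_letters (take (Suc i) (tp[i := sweep_write s])) + (s + 1) div 2 =
      num_letters (take i tp) + (Suc s + 1) div 2"
    "drop (Suc i) (tp[i := sweep_write s]) = drop (Suc i) tp"
proof -
  show "halving_tape n (tp[i := sweep_write s])"
  proof (cases "even s")
    case True
    then have "sweep_write s = tp ! i" using letter by (simp add: sweep_write_def)
    then have "tp[i := sweep_write s] = tp" by simp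
    then show ?thesis using tape by simp
  next
    case False
    then show ?thesis using halving_tape_update[OF assms] by (simp add: sweep_write_def)
  qed
  have "take (Suc i) (tp[i := sweep_write s]) = take i tp @ [sweep_write s]"
    using \<open>i < length tp\<close> by (simp add: take_Suc_conv_app_nth take_update_cancel)
  then show "num_letters (take (Suc i) (tp[i := sweep_write s])) + (s + 1) div 2 =
      num_letters (take i tp) + (Suc s + 1) div 2"
    by (cases "even s") (auto simp: sweep_write_def elim!: evenE oddE)
qed simp

lemma halving_sweep_end_step:
  assumes tape: "halving_tape n tp" and at_end: "i = n + 1"
    and count: "(s + num_letters (drop i tp)) * 2 ^ j = n" "num_letters (take i tp) = (s + 1) div 2"
    and step: "lba_step halving_lba (sweep_state s, tp, i) (q', tp', i')"
  shows "halving_inv n (q', tp', i')"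
  using step
proof cases
  case (1 b d)
  have len: "length tp = n + 2" using halving_tape_length[OF tape] .
  have "tp ! i = rmark" by (rule halving_tape_nth[OF tape]) (use at_end len in auto)
  then have rest: "num_letters (drop i tp) = 0" "num_letters (take i tp) = num_letters tp"
    using at_end len count_list_take_Suc[of i tp "Inl 0"] count_list_drop_nth[of i tp "Inl 0"] by simp_all
  from 1 \<open>tp ! i = rmark\<close>
  have "(s = 1 \<and> q' = 5 \<and> b = tp ! i \<and> d = 0) \<or> (s \<ge> 2 \<and> even s \<and> q' = 0 \<and> b = tp ! i \<and> d = -1)"
    using sweep_delta_rmark_iff by (simp add: halving_lba_def)
  then show ?thesis
  proof (elim disjE conjE)
    assume "s = 1" "q' = 5" "b = tp ! i" "d = 0"
    then show ?thesis
      using 1 count rest tape by (auto intro: halving_invI_accept[where j = j])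
  next
    assume "even s" "q' = 0" "b = tp ! i" "d = -1"
    then obtain s2 where "s = 2 * s2" by (auto elim!: evenE)
    then have "num_letters tp * 2 ^ Suc j = n" using count rest by simp
    then have "halving_inv n (0, tp, n)" using tape by (intro halving_invI_return[where j = "Suc j"]) auto
    moreover have "tp' = tp" "i' = n" using 1 \<open>b = tp ! i\<close> \<open>d = -1\<close> at_end by simp_all
    ultimately show ?thesis using \<open>q' = 0\<close> by simp
  qed
qed

lemma halving_sweep_step:
  assumes tape: "halving_tape n tp" and "i < length tp" "1 \<le> i"
    and count: "(s + num_letters (drop i tp)) * 2 ^ j = n" "num_letters (take i tp) = (s + 1) div 2"
    and step: "lba_step halving_lba (sweep_state s, tp, i) (q', tp', i')"
  shows "halving_inv n (q', tp', i')"
  using step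
proof cases
  case (1 b d)
  then have delta: "(sweep_state s, tp ! i, q', b, d) \<in> halving_delta" by (simp add: halving_lba_def)
  have len: "length tp = n + 2" using halving_tape_length[OF tape] .
  show ?thesis
  proof (rule halving_tape_nth[OF tape \<open>i < length tp\<close>])
    assume "i = 0"
    then show ?thesis using \<open>1 \<le> i\<close> by simp
  next
    assume "i = n + 1"
    then show ?thesis using halving_sweep_end_step[OF tape _ count step] by simp
  next
    assume "tp ! i = Inl 0" "i \<le> n"
    with delta have moved: "q' = sweep_state (Suc s)" "tp' = tp[i := sweep_write s]" "i' = Suc i"
      using sweep_delta_letter_iff 1 by auto
    have "(Suc s + num_letters (drop (Suc i) tp')) * 2 ^ j = n"
      using count(1) moved(2) count_list_drop_nth[OF \<open>i < length tp\<close>] \<open>tp ! i = Inl 0\<close> by simp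
    then have "halving_inv n (sweep_state (Suc s), tp', Suc i)"
      using halving_sweep_letter[OF tape \<open>tp ! i = Inl 0\<close> \<open>i < length tp\<close>, of s] moved(2) count(2)
        \<open>i \<le> n\<close> len
      by (intro halving_invI_sweep[where j = j]) auto
    then show ?thesis using moved by simp
  next
    assume "tp ! i = blank"
    with delta have "q' = sweep_state s" "b = tp ! i" "i' = Suc i"
      using 1 sweep_delta_blank_iff by auto
    moreover have "num_letters (drop i tp) = num_letters (drop (Suc i) tp)"
      "num_letters (take (Suc i) tp) = num_letters (take i tp)"
      using count_list_drop_nth[OF \<open>i < length tp\<close>] count_list_take_Suc[OF \<open>i < length tp\<close>]
        \<open>tp ! i = blank\<close> by simp_all
    moreover have "Suc i < length tp"
      by (rule halving_tape_nth[OF tape \<open>i < length tp\<close>]) (use \<open>tp ! i = blank\<close> len in auto)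
    moreover have "tp' = tp" using 1 \<open>b = tp ! i\<close> by simp
    ultimately show ?thesis
      using count tape by (simp only:) (intro halving_invI_sweep[where j = j]; simp)
  qed
qed

lemma halving_inv_step:
  assumes "halving_inv n (q, tp, i)" "lba_step halving_lba (q, tp, i) c'"
  shows "halving_inv n c'"
proof -
  obtain q' tp' i' where c': "c' = (q', tp', i')" by (cases c')
  have "q \<noteq> 5"
    using assms(2) by (cases rule: lba_step.cases) (auto simp: halving_lba_def halving_delta_def)
  with assms(1) have "halving_tape n tp" "i < length tp"
    "(q = 0 \<and> i \<le> n \<and> (\<exists>j. num_letters tp * 2 ^ j = n)) \<or>
     (\<exists>s j. q = sweep_state s \<and> 1 \<le> i \<and> (s + num_letters (drop i tp)) * 2 ^ j = n \<and>
        num_letters (take i tp) = (s + 1) div 2)"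
    unfolding halving_inv_def by auto
  then show ?thesis
    using assms(2) halving_return_step halving_sweep_step unfolding c' by blast
qed

lemma halving_inv_steps:
  assumes "(lba_step halving_lba)\<^sup>*\<^sup>* c c'" "halving_inv n c"
  shows "halving_inv n c'"
  using assms by (induction rule: rtranclp_induct) (auto intro: halving_inv_step simp del: split_paired_All)

lemma halving_return_run:
  assumes "halving_tape n tp" "i \<le> n"
  shows "(lba_step halving_lba)\<^sup>*\<^sup>* (0, tp, i) (0, tp, 0)"
  using assms(2)
proof (induction i)
  case (Suc k)
  have "Suc k < length tp" using Suc.prems halving_tape_length[OF assms(1)] by simp
  moreover have "tp ! Suc k \<in> {Inl 0, blank}"
    by (rule halving_tape_nth[OF assms(1) \<open>Suc k < length tp\<close>]) (use Suc.prems in auto)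
  ultimately have "lba_step halving_lba (0, tp, Suc k) (0, tp, k)"
    by (intro lba_step_left_read) (auto simp: halving_lba_def return_delta_iff)
  with Suc show ?case by (simp add: converse_rtranclp_into_rtranclp)
qed simp

lemma halving_sweep_run:
  assumes "halving_tape n tp" "1 \<le> i" "i \<le> n + 1"
  shows "\<exists>tp'. (lba_step halving_lba)\<^sup>*\<^sup>* (sweep_state s, tp, i)
      (sweep_state (s + num_letters (drop i tp)), tp', n + 1) \<and> halving_tape n tp' \<and>
    num_letters (take (n + 1) tp') + (s + 1) div 2 = num_letters (take i tp) + (s + num_letters (drop i tp) + 1) div 2"
  using assms
proof (induction "n + 1 - i" arbitrary: i s tp)
  case 0
  then have "i = n + 1" by simp
  then have "num_letters (drop i tp) = 0"
    using halving_tape_length[OF 0(2)] count_list_drop_nth[of i tp "Inl 0"]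
    by (rule_tac halving_tape_nth[OF 0(2), of i]) auto
  then show ?case using \<open>i = n + 1\<close> 0 by auto
next
  case (Suc k)
  have len: "length tp = n + 2" using halving_tape_length[OF Suc(3)] .
  have il: "i \<le> n" "i < length tp" "Suc i < length tp" using Suc(2,5) len by auto
  have kk: "k = n + 1 - Suc i" using Suc(2) by simp
  have "tp ! i = Inl 0 \<or> tp ! i = blank"
    by (rule halving_tape_nth[OF Suc(3) il(2)]) (use il Suc(4) in auto)
  then show ?case
  proof
    assume blank: "tp ! i = blank"
    have step: "lba_step halving_lba (sweep_state s, tp, i) (sweep_state s, tp, Suc i)"
      using il(3) blank by (intro lba_step_right_read) (simp_all add: halving_lba_def sweep_delta_blank_iff)
    obtain tp' where tp': "(lba_step halving_lba)\<^sup>*\<^sup>* (sweep_state s, tp, Suc i)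
        (sweep_state (s + num_letters (drop (Suc i) tp)), tp', n + 1)" "halving_tape n tp'"
      "num_letters (take (n + 1) tp') + (s + 1) div 2 =
         num_letters (take (Suc i) tp) + (s + num_letters (drop (Suc i) tp) + 1) div 2"
      using Suc(1)[OF kk Suc(3)] il by auto
    have "num_letters (drop i tp) = num_letters (drop (Suc i) tp)"
      "num_letters (take (Suc i) tp) = num_letters (take i tp)"
      using count_list_drop_nth[OF il(2)] count_list_take_Suc[OF il(2)] blank by simp_all
    then show ?thesis using tp' step by (metis converse_rtranclp_into_rtranclp)
  next
    assume letter: "tp ! i = Inl 0"
    define tp1 where "tp1 = tp[i := sweep_write s]"
    have step: "lba_step halving_lba (sweep_state s, tp, i) (sweep_state (Suc s), tp1, Suc i)"
      using il(3) letter unfolding tp1_def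
      by (intro lba_step_right) (simp_all add: halving_lba_def sweep_delta_letter_iff)
    note cross = halving_sweep_letter[OF Suc(3) letter il(2), of s, folded tp1_def]
    obtain tp' where tp': "(lba_step halving_lba)\<^sup>*\<^sup>* (sweep_state (Suc s), tp1, Suc i)
        (sweep_state (Suc s + num_letters (drop (Suc i) tp1)), tp', n + 1)" "halving_tape n tp'"
      "num_letters (take (n + 1) tp') + (Suc s + 1) div 2 =
         num_letters (take (Suc i) tp1) + (Suc s + num_letters (drop (Suc i) tp1) + 1) div 2"
      using Suc(1)[OF kk cross(1), where s = "Suc s"] il by fastforce
    have count: "num_letters (drop i tp) = 1 + num_letters (drop (Suc i) tp)"
      using count_list_drop_nth[OF il(2)] letter by simp
    have "(lba_step halving_lba)\<^sup>*\<^sup>* (sweep_state s, tp, i) (sweep_state (s + num_letters (drop i tp)), tp', n + 1)"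
      using tp'(1) step cross(3) count by (simp add: converse_rtranclp_into_rtranclp)
    moreover have "num_letters (take (n + 1) tp') + (s + 1) div 2 =
        num_letters (take i tp) + (s + num_letters (drop i tp) + 1) div 2"
      using tp'(3) cross(2,3) count by simp
    ultimately show ?thesis using tp'(2) by blast
  qed
qed

lemma halving_round:
  assumes tape: "halving_tape n tp" and "i \<le> n"
  obtains tp' where "(lba_step halving_lba)\<^sup>*\<^sup>* (0, tp, i) (sweep_state (num_letters tp), tp', n + 1)"
    "halving_tape n tp'" "num_letters tp' = (num_letters tp + 1) div 2"
proof -
  have len: "length tp = n + 2" using halving_tape_length[OF tape] .
  have "tp ! 0 = lmark" by (rule halving_tape_nth[OF tape, of 0]) (use len in auto)
  then have start: "lba_step halving_lba (0, tp, 0) (sweep_state 0, tp, 1)"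
    using len lba_step_right_read[of 0 tp 0 "sweep_state 0" halving_lba]
    by (simp add: halving_lba_def return_delta_iff)
  have drop1: "num_letters (drop 1 tp) = num_letters tp" and take1: "num_letters (take 1 tp) = 0"
    using \<open>tp ! 0 = lmark\<close> len count_list_drop_nth[of 0 tp "Inl 0"] count_list_take_Suc[of 0 tp "Inl 0"]
    by simp_all
  obtain tp' where sweep: "(lba_step halving_lba)\<^sup>*\<^sup>* (sweep_state 0, tp, 1)
      (sweep_state (0 + num_letters (drop 1 tp)), tp', n + 1)" and tape': "halving_tape n tp'"
    and count: "num_letters (take (n + 1) tp') + (0 + 1) div 2 =
      num_letters (take 1 tp) + (0 + num_letters (drop 1 tp) + 1) div 2"
    using halving_sweep_run[OF tape, of 1 0] by auto
  have "(lba_step halving_lba)\<^sup>*\<^sup>* (0, tp, i) (0, tp, 0)"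
    by (rule halving_return_run[OF tape \<open>i \<le> n\<close>])
  also have "(lba_step halving_lba)\<^sup>*\<^sup>* \<dots> (sweep_state (num_letters tp), tp', n + 1)"
    using start sweep drop1 by (simp add: converse_rtranclp_into_rtranclp)
  finally have run: "(lba_step halving_lba)\<^sup>*\<^sup>* (0, tp, i) (sweep_state (num_letters tp), tp', n + 1)" .
  have "n + 1 < length tp'" using halving_tape_length[OF tape'] by simp
  then have "tp' ! (n + 1) = rmark" by (rule halving_tape_nth[OF tape']) auto
  then have "num_letters tp' = num_letters (take (n + 1) tp')"
    using halving_tape_length[OF tape'] count_list_take_Suc[of "n + 1" tp' "Inl 0"] by simp
  with count drop1 take1 have "num_letters tp' = (num_letters tp + 1) div 2" by simp
  with run tape' show ?thesis by (rule that)
qed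

lemma halving_accepts_power_of_two:
  assumes "halving_tape n tp" "i \<le> n" "num_letters tp = 2 ^ m"
  shows "\<exists>tp' i'. (lba_step halving_lba)\<^sup>*\<^sup>* (0, tp, i) (5, tp', i')"
  using assms
proof (induction m arbitrary: tp i)
  case 0
  then obtain tp' where run: "(lba_step halving_lba)\<^sup>*\<^sup>* (0, tp, i) (sweep_state 1, tp', n + 1)"
    and tape': "halving_tape n tp'"
    using halving_round[OF 0(1,2)] 0(3) by auto
  have "n + 1 < length tp'" using halving_tape_length[OF tape'] by simp
  moreover have "tp' ! (n + 1) = rmark"
    by (rule halving_tape_nth[OF tape' \<open>n + 1 < length tp'\<close>]) auto
  ultimately have "lba_step halving_lba (sweep_state 1, tp', n + 1) (5, tp', n + 1)"
    by (intro lba_step_stay_read) (simp_all add: halving_lba_def sweep_delta_rmark_iff)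
  with run show ?case by (blast intro: rtranclp.rtrancl_into_rtrancl)
next
  case (Suc m)
  then obtain tp' where run: "(lba_step halving_lba)\<^sup>*\<^sup>* (0, tp, i) (sweep_state (2 ^ Suc m), tp', n + 1)"
    and tape': "halving_tape n tp'" and count: "num_letters tp' = 2 ^ m"
    using halving_round[OF Suc.prems(1,2)] by auto
  have "Suc n < length tp'" using halving_tape_length[OF tape'] by simp
  moreover have "tp' ! Suc n = rmark"
    by (rule halving_tape_nth[OF tape' \<open>Suc n < length tp'\<close>]) auto
  ultimately have "lba_step halving_lba (sweep_state (2 ^ Suc m), tp', Suc n) (0, tp', n)"
    by (intro lba_step_left_read) (simp_all add: halving_lba_def sweep_delta_rmark_iff)
  moreover obtain tp'' i' where "(lba_step halving_lba)\<^sup>*\<^sup>* (0, tp', n) (5, tp'', i')"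
    using Suc.IH[OF tape' _ count] by blast
  ultimately have "(lba_step halving_lba)\<^sup>*\<^sup>* (sweep_state (2 ^ Suc m), tp', Suc n) (5, tp'', i')"
    by (rule converse_rtranclp_into_rtranclp)
  with run show ?case by (metis Suc_eq_plus1 rtranclp_trans)
qed

lemma halving_initial_tape:
  assumes "w = replicate n 0"
  shows "halving_tape n ([lmark] @ map Inl w @ [rmark])" "num_letters ([lmark] @ map Inl w @ [rmark]) = n"
  using assms unfolding halving_tape_def by (auto simp: count_list_eq_length_filter)

lemma L_LBA_halving_lba: "L_LBA halving_lba = powers_of_two"
proof (intro set_eqI iffI)
  fix w
  assume "w \<in> L_LBA halving_lba"
  then obtain tp i where "w \<in> lists {0}"
    and run: "(lba_step halving_lba)\<^sup>*\<^sup>* (0, [lmark] @ map Inl w @ [rmark], 0) (5, tp, i)"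
    unfolding L_LBA_def by (auto simp: halving_lba_def)
  then have w: "w = replicate (length w) 0"
    by (simp add: in_lists_conv_set replicate_length_same)
  have "halving_inv (length w) (0, [lmark] @ map Inl w @ [rmark], 0)"
    using halving_initial_tape[OF w] by (intro halving_invI_return[where j = 0]) auto
  with halving_inv_steps[OF run] obtain j where "length w = 2 ^ j"
    unfolding halving_inv_def by (auto simp: sweep_state_simps)
  with w show "w \<in> powers_of_two" unfolding powers_of_two_def by auto
next
  fix w
  assume "w \<in> powers_of_two"
  then obtain k where w: "w = replicate (2 ^ k) 0" unfolding powers_of_two_def by blast
  then obtain tp i where "(lba_step halving_lba)\<^sup>*\<^sup>* (0, [lmark] @ map Inl w @ [rmark], 0) (5, tp, i)"
    using halving_accepts_power_of_two halving_initial_tape[OF w] by blast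
  moreover have "w \<in> lists {0}" using w by auto
  ultimately show "w \<in> L_LBA halving_lba" unfolding L_LBA_def by (auto simp: halving_lba_def)
qed

lemma powers_of_two_CS: "powers_of_two \<in> CS"
  using L_LBA_in_CS[OF wf_halving_lba] by (simp add: L_LBA_halving_lba)

section \<open>Simulating a GRLOWJFA by a linear bounded automaton\<close>

definition letters :: "('a + 'b) list \<Rightarrow> 'a list" where
  "letters xs = concat (map (case_sum (\<lambda>a. [a]) (\<lambda>_. [])) xs)"

lemma letters_simps [simp]:
  "letters [] = []" "letters (Inl a # xs) = a # letters xs" "letters (Inr k # xs) = letters xs"
  "letters (xs @ ys) = letters xs @ letters ys" "letters (map Inl w) = w"
  unfolding letters_def by (auto, induction w, auto)

lemma letters_take_Suc:
  "i < length xs \<Longrightarrow> letters (take (Suc i) xs) = letters (take i xs) @ letters [xs ! i]"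
  by (simp add: take_Suc_conv_app_nth)

lemma letters_drop_nth:
  "i < length xs \<Longrightarrow> letters (drop i xs) = letters [xs ! i] @ letters (drop (Suc i) xs)"
  by (metis Cons_nth_drop_Suc append_Cons append_Nil letters_simps(4))

lemma letters_take_drop: "letters xs = letters (take i xs) @ letters (drop i xs)"
  by (metis append_take_drop_id letters_simps(4))

definition overlaps :: "'a list \<Rightarrow> 'a list \<Rightarrow> bool" where
  "overlaps u x \<longleftrightarrow> (\<exists>u1 u2 x1 x2. u = u1 @ u2 \<and> x = x1 @ x2 \<and> u2 \<noteq> [] \<and> x1 \<noteq> [] \<and> u2 @ x1 = x)"

lemma overlaps_iff_suffix:
  "overlaps u x \<longleftrightarrow> (\<exists>u2 x1. suffix u2 u \<and> u2 \<noteq> [] \<and> x1 \<noteq> [] \<and> prefix x1 x \<and> u2 @ x1 = x)"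
  unfolding overlaps_def suffix_def prefix_def by blast

lemma grl_move_iff:
  "grl_move A (t, p, y) (t', p', y') \<longleftrightarrow>
    (\<exists>x q u v. (p, x, q) \<in> rules A \<and> no_subword_in u (Sigma_p A p) \<and> \<not> overlaps u x \<and>
       y = u @ x @ v \<and> t' = t @ u \<and> p' = q \<and> y' = v) \<or>
    (t \<noteq> [] \<and> no_subword_in y (Sigma_p A p) \<and> t' = [] \<and> p' = p \<and> y' = t @ y)"
  (is "_ \<longleftrightarrow> ?A \<or> ?B")
proof
  assume "grl_move A (t, p, y) (t', p', y')"
  then show "?A \<or> ?B" by (cases rule: grl_move.cases) (auto simp: overlaps_def)
next
  assume "?A \<or> ?B"
  then show "grl_move A (t, p, y) (t', p', y')"
    by (auto intro: jump_delete[folded overlaps_def] jump_back)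
qed

definition last_n :: "nat \<Rightarrow> 'a list \<Rightarrow> 'a list" where
  "last_n k xs = drop (length xs - k) xs"

lemma suffix_last_n: "suffix (last_n k xs) xs"
  unfolding last_n_def by (simp add: suffix_drop)

lemma length_last_n: "length (last_n k xs) = min k (length xs)"
  unfolding last_n_def by simp

lemma set_last_n: "set (last_n k xs) \<subseteq> set xs"
  unfolding last_n_def by (simp add: set_drop_subset)

lemma last_n_Nil [simp]: "last_n k [] = []"
  unfolding last_n_def by simp

lemma last_n_last_n_append: "last_n k (last_n k xs @ ys) = last_n k (xs @ ys)"
  unfolding last_n_def by (simp add: drop_drop) (metis add.commute add_diff_cancel_left' diff_diff_left
      diff_is_0_eq' diff_le_self le_add_diff_inverse2 nat_le_linear)

lemma suffix_last_nI:
  assumes "suffix s xs" "length s \<le> k"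
  shows "suffix s (last_n k xs)"
  using assms suffix_length_le[OF assms(1)]
  by (intro suffix_length_suffix[OF assms(1) suffix_last_n]) (simp add: length_last_n)

lemma overlaps_last_n:
  assumes "length x \<le> k"
  shows "overlaps (last_n k u) x \<longleftrightarrow> overlaps u x"
proof
  assume "overlaps (last_n k u) x"
  then obtain u2 x1 where "suffix u2 (last_n k u)" "u2 \<noteq> []" "x1 \<noteq> []" "prefix x1 x" "u2 @ x1 = x"
    unfolding overlaps_iff_suffix by blast
  moreover have "suffix u2 u" using suffix_order.trans[OF \<open>suffix u2 (last_n k u)\<close> suffix_last_n] .
  ultimately show "overlaps u x"
    unfolding overlaps_iff_suffix by blast
next
  assume "overlaps u x"
  then obtain u2 x1 where h: "suffix u2 u" "u2 \<noteq> []" "x1 \<noteq> []" "prefix x1 x" "u2 @ x1 = x"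
    unfolding overlaps_iff_suffix by blast
  have "length u2 \<le> k" using h(5) assms by auto
  then have "suffix u2 (last_n k u)" using suffix_last_nI h(1) by blast
  then show "overlaps (last_n k u) x" unfolding overlaps_iff_suffix using h by blast
qed

lemma no_subword_in_appendD: "no_subword_in (u @ v) W \<Longrightarrow> no_subword_in u W"
  unfolding no_subword_in_def by (meson sublist_append_rightI sublist_order.order.trans)

text \<open>A factor of u @ [a] that is not a factor of u is a suffix of it; for factors of length at
  most k it is therefore a suffix of the last k letters of u, followed by a.\<close>

lemma no_subword_in_snoc_iff:
  assumes "no_subword_in u W" "\<forall>s \<in> W. length s \<le> k"
  shows "no_subword_in (u @ [a]) W \<longleftrightarrow> (\<forall>s \<in> W. \<not> suffix s (last_n k u @ [a]))"
proof
  assume ns: "no_subword_in (u @ [a]) W"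
  have "suffix (last_n k u @ [a]) (u @ [a])" using suffix_last_n by (simp add: suffix_def)
  then show "\<forall>s \<in> W. \<not> suffix s (last_n k u @ [a])"
    using ns unfolding no_subword_in_def by (meson suffix_imp_sublist suffix_order.trans)
next
  assume ok: "\<forall>s \<in> W. \<not> suffix s (last_n k u @ [a])"
  show "no_subword_in (u @ [a]) W"
    unfolding no_subword_in_def
  proof (intro ballI notI)
    fix s assume s: "s \<in> W" "sublist s (u @ [a])"
    then consider "suffix s (u @ [a])" | "sublist s u" by (auto simp: sublist_snoc)
    then show False
    proof cases
      case 1
      have "suffix (last_n k u @ [a]) (u @ [a])" using suffix_last_n by (simp add: suffix_def)
      moreover have "length s \<le> length (last_n k u @ [a])"
        using assms(2) s(1) suffix_length_le[OF 1] by (auto simp: length_last_n min_def)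
      ultimately have "suffix s (last_n k u @ [a])" using suffix_length_suffix[OF 1] by blast
      then show False using ok s(1) by blast
    next
      case 2
      then show False using assms(1) s(1) unfolding no_subword_in_def by blast
    qed
  qed
qed

text \<open>In Main p the letters left of the head form the already jumped-over part t of the
  configuration t p y and those right of it form y; deleted letters are overwritten by blanks.
  Scan p x q b guesses the factor u skipped by the rule (p, x, q), remembering in b the last
  letters of u; Delete x q erases the remaining part x of the deleted word; ScanBack p b checks
  that the rest of the tape admits a jump back, Rewind p returns to the left end; CheckRight
  and CheckLeft verify that no letter is left.\<close>

datatype ('a, 's) sim_state = Start | Main 's | Scan 's "'a list" 's "'a list" | Delete "'a list" 's
  | ScanBack 's "'a list" | Rewind 's | CheckRight | CheckLeft | Accept

instance sim_state :: (countable, countable) countable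
  by countable_datatype

locale grlowjfa_simulation =
  fixes A :: "('a :: countable, 's :: countable) grlowjfa"
  assumes wf: "wf_grlowjfa A"
begin

abbreviation K :: nat where "K \<equiv> max_rule_length A"

lemma Sigma_p_length: "s \<in> Sigma_p A p \<Longrightarrow> length s \<le> K"
  unfolding Sigma_p_def using rule_length_le_max[OF wf] by blast

definition window_ok :: "'s \<Rightarrow> 'a list \<Rightarrow> 'a \<Rightarrow> bool" where
  "window_ok p b a \<longleftrightarrow> (\<forall>s \<in> Sigma_p A p. \<not> suffix s (b @ [a]))"

lemma window_ok_iff:
  assumes "no_subword_in u (Sigma_p A p)"
  shows "window_ok p (last_n K u) a \<longleftrightarrow> no_subword_in (u @ [a]) (Sigma_p A p)"
  unfolding window_ok_def using no_subword_in_snoc_iff[OF assms] Sigma_p_length by blast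

definition windows :: "'a list set" where
  "windows = {b. set b \<subseteq> alph A \<and> length b \<le> K}"

lemma finite_windows: "finite windows"
  unfolding windows_def using wf unfolding wf_grlowjfa_def by (intro finite_lists_length_le) auto

lemma last_n_in_windows: "set u \<subseteq> alph A \<Longrightarrow> last_n K u \<in> windows"
  unfolding windows_def using length_last_n[of K u] set_last_n[of K u] by auto

lemma rule_in_windows: "(p, x, q) \<in> rules A \<Longrightarrow> x \<in> windows"
  using rule_wf[OF wf] rule_length_le_max[OF wf] unfolding windows_def by blast

fun valid_sim_state :: "('a, 's) sim_state \<Rightarrow> bool" where
  "valid_sim_state (Main p) \<longleftrightarrow> p \<in> states A"
| "valid_sim_state (Scan p x q b) \<longleftrightarrow> (p, x, q) \<in> rules A \<and> b \<in> windows"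
| "valid_sim_state (Delete x q) \<longleftrightarrow> x \<in> windows \<and> q \<in> states A"
| "valid_sim_state (ScanBack p b) \<longleftrightarrow> p \<in> states A \<and> b \<in> windows"
| "valid_sim_state (Rewind p) \<longleftrightarrow> p \<in> states A"
| "valid_sim_state _ \<longleftrightarrow> True"

lemma finite_valid_sim_states: "finite {s. valid_sim_state s}"
proof -
  have "{s. valid_sim_state s} \<subseteq> {Start, CheckRight, CheckLeft, Accept} \<union> Main ` states A \<union>
      Rewind ` states A \<union> (\<lambda>((p, x, q), b). Scan p x q b) ` (rules A \<times> windows) \<union>
      case_prod Delete ` (windows \<times> states A) \<union> case_prod ScanBack ` (states A \<times> windows)"
  proof
    fix s assume "s \<in> {s. valid_sim_state s}"
    then show "s \<in> {Start, CheckRight, CheckLeft, Accept} \<union> Main ` states A \<union>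
      Rewind ` states A \<union> (\<lambda>((p, x, q), b). Scan p x q b) ` (rules A \<times> windows) \<union>
      case_prod Delete ` (windows \<times> states A) \<union> case_prod ScanBack ` (states A \<times> windows)"
      by (cases s) (auto intro: image_eqI[where x = "((_, _, _), _)"] image_eqI[where x = "(_, _)"])
  qed
  moreover have "finite (rules A)" "finite (states A)"
    using wf unfolding wf_grlowjfa_def by auto
  ultimately show ?thesis
    using finite_windows by (auto intro: finite_subset)
qed

definition sim_symbols :: "('a + nat) set" where
  "sim_symbols = Inl ` alph A \<union> {blank, lmark, rmark}"

inductive_set sim_delta :: "(('a, 's) sim_state \<times> ('a + nat) \<times> ('a, 's) sim_state \<times> ('a + nat) \<times> int) set" where
  start: "(Start, lmark, Main (init A), lmark, 1) \<in> sim_delta"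
| choose_delete: "(p, x, q) \<in> rules A \<Longrightarrow> (Main p, c, Scan p x q [], c, 0) \<in> sim_delta"
| scan_blank: "(Scan p x q b, blank, Scan p x q b, blank, 1) \<in> sim_delta"
| scan_letter: "window_ok p b a \<Longrightarrow> (Scan p x q b, Inl a, Scan p x q (last_n K (b @ [a])), Inl a, 1) \<in> sim_delta"
| end_scan: "\<not> overlaps b x \<Longrightarrow> (Scan p x q b, c, Delete x q, c, 0) \<in> sim_delta"
| delete_blank: "(Delete x q, blank, Delete x q, blank, 1) \<in> sim_delta"
| delete_letter: "(Delete (a # x) q, Inl a, if x = [] then Main q else Delete x q, blank, 1) \<in> sim_delta"
| choose_jump: "(Main p, c, ScanBack p [], c, 0) \<in> sim_delta"
| back_blank: "(ScanBack p b, blank, ScanBack p b, blank, 1) \<in> sim_delta"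
| back_letter: "window_ok p b a \<Longrightarrow> (ScanBack p b, Inl a, ScanBack p (last_n K (b @ [a])), Inl a, 1) \<in> sim_delta"
| back_end: "(ScanBack p b, rmark, Rewind p, rmark, -1) \<in> sim_delta"
| rewind_blank: "(Rewind p, blank, Rewind p, blank, -1) \<in> sim_delta"
| rewind_letter: "(Rewind p, Inl a, Rewind p, Inl a, -1) \<in> sim_delta"
| rewind_end: "(Rewind p, lmark, Main p, lmark, 1) \<in> sim_delta"
| choose_accept: "p \<in> finals A \<Longrightarrow> (Main p, c, CheckRight, c, 0) \<in> sim_delta"
| check_right_blank: "(CheckRight, blank, CheckRight, blank, 1) \<in> sim_delta"
| check_right_end: "(CheckRight, rmark, CheckLeft, rmark, -1) \<in> sim_delta"
| check_left_blank: "(CheckLeft, blank, CheckLeft, blank, -1) \<in> sim_delta"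
| check_left_end: "(CheckLeft, lmark, Accept, lmark, 0) \<in> sim_delta"

text \<open>sim_delta is infinite; restricting it to valid states and symbols makes it finite
  without removing any transition that a run from an initial configuration can use.\<close>

definition sim_lba :: "('a, ('a, 's) sim_state) lba" where
  "sim_lba = \<lparr> lba_states = {s. valid_sim_state s}, lba_input = alph A, lba_tape = sim_symbols,
     lba_lm = lmark, lba_rm = rmark,
     lba_delta = sim_delta \<inter> ({s. valid_sim_state s} \<times> sim_symbols \<times> {s. valid_sim_state s} \<times> sim_symbols \<times> {-1, 0, 1}),
     lba_init = Start, lba_finals = {Accept} \<rparr>"

lemma sim_delta_markers:
  assumes "(p, c, q, c', d) \<in> sim_delta"
  shows "(c = lmark \<longrightarrow> c' = lmark \<and> d \<ge> 0) \<and> (c = rmark \<longrightarrow> c' = rmark \<and> d \<le> 0) \<and>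
         (c \<noteq> lmark \<longrightarrow> c' \<noteq> lmark) \<and> (c \<noteq> rmark \<longrightarrow> c' \<noteq> rmark)"
  using assms by (cases rule: sim_delta.cases) auto

lemma wf_sim_lba: "wf_lba sim_lba"
proof -
  have "\<forall>(p, c, q, c', d) \<in> lba_delta sim_lba.
      p \<in> lba_states sim_lba \<and> q \<in> lba_states sim_lba \<and> c \<in> lba_tape sim_lba \<and> c' \<in> lba_tape sim_lba \<and>
      d \<in> {-1, 0, 1} \<and>
      (c = lba_lm sim_lba \<longrightarrow> c' = lba_lm sim_lba \<and> d \<ge> 0) \<and>
      (c = lba_rm sim_lba \<longrightarrow> c' = lba_rm sim_lba \<and> d \<le> 0) \<and>
      (c \<noteq> lba_lm sim_lba \<longrightarrow> c' \<noteq> lba_lm sim_lba) \<and> (c \<noteq> lba_rm sim_lba \<longrightarrow> c' \<noteq> lba_rm sim_lba)"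
    using sim_delta_markers unfolding sim_lba_def lba.simps by blast
  moreover have "finite (lba_states sim_lba) \<and> finite (lba_input sim_lba) \<and> finite (lba_tape sim_lba) \<and>
     Inl ` lba_input sim_lba \<subseteq> lba_tape sim_lba \<and>
     lba_lm sim_lba \<in> lba_tape sim_lba - Inl ` lba_input sim_lba \<and>
     lba_rm sim_lba \<in> lba_tape sim_lba - Inl ` lba_input sim_lba \<and> lba_lm sim_lba \<noteq> lba_rm sim_lba \<and>
     lba_init sim_lba \<in> lba_states sim_lba \<and> lba_finals sim_lba \<subseteq> lba_states sim_lba \<and>
     finite (lba_delta sim_lba)"
  proof -
    have "finite (alph A)" using wf unfolding wf_grlowjfa_def by blast
    then have "finite sim_symbols" unfolding sim_symbols_def by simp
    then have "finite ({s. valid_sim_state s} \<times> sim_symbols \<times> {s. valid_sim_state s} \<times> sim_symbols \<times> {-1, 0, 1 :: int})"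
      using finite_valid_sim_states by simp
    then show ?thesis
      using finite_valid_sim_states \<open>finite (alph A)\<close> \<open>finite sim_symbols\<close>
      unfolding sim_lba_def sim_symbols_def by auto
  qed
  ultimately show ?thesis unfolding wf_lba_def by blast
qed

definition sim_tape :: "('a + nat) list \<Rightarrow> bool" where
  "sim_tape tp \<longleftrightarrow> (\<exists>cs. tp = lmark # cs @ [rmark] \<and> set cs \<subseteq> Inl ` alph A \<union> {blank})"

lemma sim_tape_initial: "w \<in> lists (alph A) \<Longrightarrow> sim_tape ([lmark] @ map Inl w @ [rmark])"
  unfolding sim_tape_def by auto

lemma sim_tape_length: "sim_tape tp \<Longrightarrow> length tp \<ge> 2"
  unfolding sim_tape_def by auto

lemma sim_tape_ends: "sim_tape tp \<Longrightarrow> tp ! 0 = lmark \<and> tp ! (length tp - 1) = rmark"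
  unfolding sim_tape_def by (auto simp: nth_append)

lemma sim_tape_nth:
  assumes "sim_tape tp" "i < length tp"
  obtains "i = 0" "tp ! i = lmark" | "i = length tp - 1" "0 < i" "tp ! i = rmark"
    | "0 < i" "i < length tp - 1" "tp ! i = blank"
    | a where "0 < i" "i < length tp - 1" "a \<in> alph A" "tp ! i = Inl a"
proof -
  obtain cs where cs: "tp = lmark # cs @ [rmark]" "set cs \<subseteq> Inl ` alph A \<union> {blank}"
    using assms(1) unfolding sim_tape_def by blast
  show ?thesis
  proof (cases i)
    case 0
    then show ?thesis using cs that by simp
  next
    case (Suc k)
    show ?thesis
    proof (cases "k < length cs")
      case True
      then have "tp ! i = cs ! k" "cs ! k \<in> Inl ` alph A \<union> {blank}"
        using cs Suc nth_mem by (auto simp: nth_append)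
      then show ?thesis using Suc True cs that by auto
    next
      case False
      then have "k = length cs" using assms(2) cs Suc by simp
      then show ?thesis using cs Suc that by (simp add: nth_append)
    qed
  qed
qed

lemma sim_tape_lmark: "sim_tape tp \<Longrightarrow> i < length tp \<Longrightarrow> tp ! i = lmark \<Longrightarrow> i = 0"
  by (erule sim_tape_nth) auto

lemma sim_tape_rmark: "sim_tape tp \<Longrightarrow> i < length tp \<Longrightarrow> tp ! i = rmark \<Longrightarrow> i = length tp - 1 \<and> 0 < i"
  by (erule sim_tape_nth) auto

lemma sim_tape_inner:
  "sim_tape tp \<Longrightarrow> i < length tp \<Longrightarrow> tp ! i \<noteq> lmark \<Longrightarrow> tp ! i \<noteq> rmark \<Longrightarrow> 0 < i \<and> i < length tp - 1"
  by (erule sim_tape_nth) auto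

lemma sim_tape_letter: "sim_tape tp \<Longrightarrow> i < length tp \<Longrightarrow> tp ! i = Inl a \<Longrightarrow> a \<in> alph A"
  by (erule sim_tape_nth) auto

lemma sim_tape_symbols: "sim_tape tp \<Longrightarrow> i < length tp \<Longrightarrow> tp ! i \<in> sim_symbols"
  unfolding sim_symbols_def by (erule sim_tape_nth) auto

lemma sim_tape_erase:
  assumes "sim_tape tp" "tp ! i = Inl a" "i < length tp"
  shows "sim_tape (tp[i := blank])"
proof -
  obtain cs where cs: "tp = lmark # cs @ [rmark]" "set cs \<subseteq> Inl ` alph A \<union> {blank}"
    using assms(1) unfolding sim_tape_def by blast
  have "0 < i \<and> i < length tp - 1" using sim_tape_inner[OF assms(1,3)] assms(2) by simp
  then obtain k where k: "i = Suc k" "k < length cs" using cs by (cases i) auto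
  have "tp[i := blank] = lmark # cs[k := blank] @ [rmark]" using cs k by (simp add: list_update_append)
  moreover have "set (cs[k := blank]) \<subseteq> Inl ` alph A \<union> {blank}"
    using cs(2) set_update_subset_insert[of cs k blank] by auto
  ultimately show ?thesis unfolding sim_tape_def by blast
qed

lemma letters_sim_tape: "sim_tape tp \<Longrightarrow> set (letters tp) \<subseteq> alph A"
  unfolding sim_tape_def
proof (elim exE conjE)
  fix cs assume "tp = lmark # cs @ [rmark]" "set cs \<subseteq> Inl ` alph A \<union> {blank}"
  moreover have "set cs \<subseteq> Inl ` alph A \<union> {blank} \<Longrightarrow> set (letters cs) \<subseteq> alph A" for cs
    by (induction cs) (auto simp: letters_def)
  ultimately show "set (letters tp) \<subseteq> alph A" by simp
qed

lemma letters_drop_sim_tape: "sim_tape tp \<Longrightarrow> set (letters (drop i tp)) \<subseteq> alph A"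
  using letters_sim_tape letters_take_drop[of tp i] by fastforce

lemma letters_sim_tape_ends:
  assumes "sim_tape tp"
  shows "letters (take 1 tp) = []" "letters (drop 1 tp) = letters tp"
    "letters (take (length tp - 1) tp) = letters tp" "letters (drop (length tp - 1) tp) = []"
  using assms unfolding sim_tape_def by auto

abbreviation grl_reach :: "'a list \<Rightarrow> 'a list \<times> 's \<times> 'a list \<Rightarrow> bool" where
  "grl_reach w c \<equiv> (grl_move A)\<^sup>*\<^sup>* ([], init A, w) c"

text \<open>Here u are the letters scanned since the simulation left Main p.\<close>

definition scanned :: "'a list \<Rightarrow> 's \<Rightarrow> 'a list \<Rightarrow> 'a list \<Rightarrow> 'a list \<Rightarrow> bool" where
  "scanned w p b t y \<longleftrightarrow> (\<exists>t0 u. grl_reach w (t0, p, u @ y) \<and> t = t0 @ u \<and> b = last_n K u \<and>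
     no_subword_in u (Sigma_p A p))"

lemma scanned_start: "grl_reach w (t, p, y) \<Longrightarrow> scanned w p [] t y"
  unfolding scanned_def using no_subword_in_Nil[OF wf] by (intro exI[of _ t] exI[of _ "[]"]) simp

lemma scanned_letter:
  assumes "scanned w p b t (a # y)" "window_ok p b a"
  shows "scanned w p (last_n K (b @ [a])) (t @ [a]) y"
proof -
  obtain t0 u where u: "grl_reach w (t0, p, u @ a # y)" "t = t0 @ u" "b = last_n K u"
    "no_subword_in u (Sigma_p A p)"
    using assms(1) unfolding scanned_def by blast
  have "no_subword_in (u @ [a]) (Sigma_p A p)" using window_ok_iff[OF u(4)] assms(2) u(3) by simp
  moreover have "last_n K (b @ [a]) = last_n K (u @ [a])" using u(3) last_n_last_n_append by simp
  ultimately show ?thesis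
    unfolding scanned_def using u(1,2) by (intro exI[of _ t0] exI[of _ "u @ [a]"]) simp
qed

lemma scanned_jump_back:
  assumes "scanned w p b t []"
  shows "grl_reach w ([], p, t)"
proof -
  obtain t0 u where u: "grl_reach w (t0, p, u)" "t = t0 @ u" "no_subword_in u (Sigma_p A p)"
    using assms unfolding scanned_def by auto
  show ?thesis
  proof (cases "t0 = []")
    case False
    then have "grl_move A (t0, p, u) ([], p, t0 @ u)" by (rule jump_back[OF _ u(3)])
    with u show ?thesis by (simp add: rtranclp.rtrancl_into_rtrancl)
  qed (use u in simp)
qed

text \<open>Here x1 is the already erased prefix of the deleted word x1 @ x.\<close>

definition deleting :: "'a list \<Rightarrow> 'a list \<Rightarrow> 's \<Rightarrow> 'a list \<Rightarrow> 'a list \<Rightarrow> bool" where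
  "deleting w x q t y \<longleftrightarrow> x \<noteq> [] \<and> (\<exists>t0 p u x1. grl_reach w (t0, p, u @ x1 @ y) \<and>
     (p, x1 @ x, q) \<in> rules A \<and> no_subword_in u (Sigma_p A p) \<and> \<not> overlaps u (x1 @ x) \<and> t = t0 @ u)"

lemma deleting_start:
  assumes "scanned w p b t y" "(p, x, q) \<in> rules A" "\<not> overlaps b x"
  shows "deleting w x q t y"
proof -
  obtain t0 u where u: "grl_reach w (t0, p, u @ y)" "t = t0 @ u" "b = last_n K u"
    "no_subword_in u (Sigma_p A p)"
    using assms(1) unfolding scanned_def by blast
  have "\<not> overlaps u x"
    using assms(3) u(3) overlaps_last_n[OF rule_length_le_max[OF wf assms(2)]] by simp
  then show ?thesis
    unfolding deleting_def using u assms(2) rule_wf(3)[OF wf assms(2)]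
    by (intro conjI exI[of _ t0] exI[of _ p] exI[of _ u] exI[of _ "[]"]) simp_all
qed

lemma deleting_letter:
  assumes "deleting w (a # x) q t (a # y)" "x \<noteq> []"
  shows "deleting w x q t y"
  using assms unfolding deleting_def by (metis append.assoc append_Cons append_Nil)

lemma deleting_done:
  assumes "deleting w [a] q t (a # y)"
  shows "grl_reach w (t, q, y)"
proof -
  obtain t0 p u x1 where d: "grl_reach w (t0, p, u @ x1 @ a # y)" "(p, x1 @ [a], q) \<in> rules A"
    "no_subword_in u (Sigma_p A p)" "\<not> overlaps u (x1 @ [a])" "t = t0 @ u"
    using assms unfolding deleting_def by blast
  have "grl_move A (t0, p, u @ (x1 @ [a]) @ y) (t0 @ u, q, y)"
    by (rule jump_delete[folded overlaps_def, OF d(2,3,4)])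
  with d show ?thesis by (simp add: rtranclp.rtrancl_into_rtrancl)
qed

fun sim_inv_state :: "'a list \<Rightarrow> ('a, 's) sim_state \<Rightarrow> ('a + nat) list \<Rightarrow> nat \<Rightarrow> bool" where
  "sim_inv_state w Start tp i \<longleftrightarrow> tp = [lmark] @ map Inl w @ [rmark] \<and> i = 0"
| "sim_inv_state w (Main p) tp i \<longleftrightarrow> grl_reach w (letters (take i tp), p, letters (drop i tp))"
| "sim_inv_state w (Scan p x q b) tp i \<longleftrightarrow>
     (p, x, q) \<in> rules A \<and> scanned w p b (letters (take i tp)) (letters (drop i tp))"
| "sim_inv_state w (Delete x q) tp i \<longleftrightarrow> deleting w x q (letters (take i tp)) (letters (drop i tp))"
| "sim_inv_state w (ScanBack p b) tp i \<longleftrightarrow> scanned w p b (letters (take i tp)) (letters (drop i tp))"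
| "sim_inv_state w (Rewind p) tp i \<longleftrightarrow> grl_reach w ([], p, letters tp)"
| "sim_inv_state w CheckRight tp i \<longleftrightarrow>
     (\<exists>qf \<in> finals A. grl_reach w (letters (take i tp), qf, letters (drop i tp)))"
| "sim_inv_state w CheckLeft tp i \<longleftrightarrow>
     (\<exists>qf \<in> finals A. grl_reach w (letters tp, qf, [])) \<and> letters (drop (Suc i) tp) = []"
| "sim_inv_state w Accept tp i \<longleftrightarrow> (\<exists>qf \<in> finals A. grl_reach w ([], qf, []))"

definition sim_inv :: "'a list \<Rightarrow> ('a, 's) sim_state \<times> ('a + nat) list \<times> nat \<Rightarrow> bool" where
  "sim_inv w = (\<lambda>(s, tp, i). sim_tape tp \<and> i < length tp \<and> sim_inv_state w s tp i)"

lemma sim_lba_stepE: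
  assumes "lba_step sim_lba (s, tp, i) (s', tp', i')"
  obtains c d where "(s, tp ! i, s', c, d) \<in> sim_delta" "tp' = tp[i := c]" "c = tp ! i \<Longrightarrow> tp' = tp"
    "d = 1 \<Longrightarrow> i' = Suc i" "d = 0 \<Longrightarrow> i' = i" "d = -1 \<Longrightarrow> i' = i - 1"
  using assms by (cases rule: lba_step.cases) (auto simp: sim_lba_def)

lemma letters_move_blank:
  "i < length tp \<Longrightarrow> tp ! i = Inr k \<Longrightarrow>
    letters (take (Suc i) tp) = letters (take i tp) \<and> letters (drop i tp) = letters (drop (Suc i) tp)"
  using letters_take_Suc[of i tp] letters_drop_nth[of i tp] by simp

lemma letters_move_letter:
  "i < length tp \<Longrightarrow> tp ! i = Inl a \<Longrightarrow>
    letters (take (Suc i) tp) = letters (take i tp) @ [a] \<and> letters (drop i tp) = a # letters (drop (Suc i) tp)"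
  using letters_take_Suc[of i tp] letters_drop_nth[of i tp] by simp

lemma sim_inv_step_Start:
  assumes inv: "sim_inv w (Start, tp, i)" and step: "lba_step sim_lba (Start, tp, i) (s', tp', i')"
  shows "sim_inv w (s', tp', i')"
proof -
  have tape: "sim_tape tp" and init: "tp = [lmark] @ map Inl w @ [rmark]" "i = 0"
    using inv unfolding sim_inv_def by auto
  obtain c d where delta: "(Start, tp ! i, s', c, d) \<in> sim_delta" and tp': "tp' = tp[i := c]"
    and keep: "c = tp ! i \<Longrightarrow> tp' = tp"
    and i': "d = 1 \<Longrightarrow> i' = Suc i" "d = 0 \<Longrightarrow> i' = i" "d = -1 \<Longrightarrow> i' = i - 1"
    using sim_lba_stepE[OF step] by metis
  from delta have "s' = Main (init A) \<and> c = tp ! i \<and> d = 1"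
    by (cases rule: sim_delta.cases) auto
  then show ?thesis using tape keep i' init unfolding sim_inv_def by auto
qed

lemma sim_inv_step_Main:
  assumes inv: "sim_inv w (Main p, tp, i)" and step: "lba_step sim_lba (Main p, tp, i) (s', tp', i')"
  shows "sim_inv w (s', tp', i')"
proof -
  have tape: "sim_tape tp" "i < length tp"
    and reach: "grl_reach w (letters (take i tp), p, letters (drop i tp))"
    using inv unfolding sim_inv_def by auto
  obtain c d where delta: "(Main p, tp ! i, s', c, d) \<in> sim_delta" and tp': "tp' = tp[i := c]"
    and keep: "c = tp ! i \<Longrightarrow> tp' = tp"
    and i': "d = 1 \<Longrightarrow> i' = Suc i" "d = 0 \<Longrightarrow> i' = i" "d = -1 \<Longrightarrow> i' = i - 1"
    using sim_lba_stepE[OF step] by metis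
  from delta have "c = tp ! i \<and> d = 0" by (cases rule: sim_delta.cases) auto
  then have same: "tp' = tp" "i' = i" using keep i' by simp_all
  from delta show ?thesis
  proof (cases rule: sim_delta.cases)
    case (choose_delete x q)
    then show ?thesis using same tape scanned_start[OF reach] unfolding sim_inv_def by simp
  next
    case choose_jump
    then show ?thesis using same tape scanned_start[OF reach] unfolding sim_inv_def by simp
  next
    case choose_accept
    then show ?thesis using same tape reach unfolding sim_inv_def by auto
  qed
qed

lemma sim_inv_step_Scan:
  assumes inv: "sim_inv w (Scan p x q b, tp, i)" and step: "lba_step sim_lba (Scan p x q b, tp, i) (s', tp', i')"
  shows "sim_inv w (s', tp', i')"
proof -
  have tape: "sim_tape tp" "i < length tp" and rule: "(p, x, q) \<in> rules A"
    and sc: "scanned w p b (letters (take i tp)) (letters (drop i tp))"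
    using inv unfolding sim_inv_def by auto
  obtain c d where delta: "(Scan p x q b, tp ! i, s', c, d) \<in> sim_delta" and tp': "tp' = tp[i := c]"
    and keep: "c = tp ! i \<Longrightarrow> tp' = tp"
    and i': "d = 1 \<Longrightarrow> i' = Suc i" "d = 0 \<Longrightarrow> i' = i" "d = -1 \<Longrightarrow> i' = i - 1"
    using sim_lba_stepE[OF step] by metis
  from delta show ?thesis
  proof (cases rule: sim_delta.cases)
    case scan_blank
    then show ?thesis
      using tape sc keep i' letters_move_blank[OF tape(2)] sim_tape_inner[OF tape] rule
      unfolding sim_inv_def by auto
  next
    case (scan_letter a)
    then have "scanned w p (last_n K (b @ [a])) (letters (take (Suc i) tp)) (letters (drop (Suc i) tp))"
      using sc letters_move_letter[OF tape(2)] scanned_letter by simp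
    then show ?thesis
      using scan_letter tape keep i' sim_tape_inner[OF tape] rule unfolding sim_inv_def by auto
  next
    case end_scan
    then show ?thesis
      using tape keep i' deleting_start[OF sc rule] rule_wf(3)[OF wf rule] unfolding sim_inv_def by auto
  qed
qed

lemma sim_inv_step_Delete:
  assumes inv: "sim_inv w (Delete x q, tp, i)" and step: "lba_step sim_lba (Delete x q, tp, i) (s', tp', i')"
  shows "sim_inv w (s', tp', i')"
proof -
  have tape: "sim_tape tp" "i < length tp"
    and del: "deleting w x q (letters (take i tp)) (letters (drop i tp))"
    using inv unfolding sim_inv_def by auto
  obtain c d where delta: "(Delete x q, tp ! i, s', c, d) \<in> sim_delta" and tp': "tp' = tp[i := c]"
    and keep: "c = tp ! i \<Longrightarrow> tp' = tp"
    and i': "d = 1 \<Longrightarrow> i' = Suc i" "d = 0 \<Longrightarrow> i' = i" "d = -1 \<Longrightarrow> i' = i - 1"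
    using sim_lba_stepE[OF step] by metis
  from delta show ?thesis
  proof (cases rule: sim_delta.cases)
    case delete_blank
    then show ?thesis
      using tape del keep i' letters_move_blank[OF tape(2)] sim_tape_inner[OF tape] unfolding sim_inv_def by auto
  next
    case (delete_letter a x')
    have "letters (take (Suc i) tp') = letters (take i tp)" "letters (drop (Suc i) tp') = letters (drop (Suc i) tp)"
      using tp' tape(2) delete_letter by (simp_all add: take_Suc_conv_app_nth take_update_cancel)
    moreover have "letters (drop i tp) = a # letters (drop (Suc i) tp)"
      using letters_move_letter[OF tape(2)] delete_letter by simp
    moreover have "sim_tape tp'" "Suc i < length tp'" "i' = Suc i"
      using sim_tape_erase[OF tape(1) _ tape(2)] sim_tape_inner[OF tape] tp' i' delete_letter by auto
    ultimately show ?thesis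
      using del delete_letter deleting_done deleting_letter unfolding sim_inv_def by auto
  qed
qed

lemma sim_inv_step_ScanBack:
  assumes inv: "sim_inv w (ScanBack p b, tp, i)" and step: "lba_step sim_lba (ScanBack p b, tp, i) (s', tp', i')"
  shows "sim_inv w (s', tp', i')"
proof -
  have tape: "sim_tape tp" "i < length tp"
    and sc: "scanned w p b (letters (take i tp)) (letters (drop i tp))"
    using inv unfolding sim_inv_def by auto
  obtain c d where delta: "(ScanBack p b, tp ! i, s', c, d) \<in> sim_delta" and tp': "tp' = tp[i := c]"
    and keep: "c = tp ! i \<Longrightarrow> tp' = tp"
    and i': "d = 1 \<Longrightarrow> i' = Suc i" "d = 0 \<Longrightarrow> i' = i" "d = -1 \<Longrightarrow> i' = i - 1"
    using sim_lba_stepE[OF step] by metis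
  from delta show ?thesis
  proof (cases rule: sim_delta.cases)
    case back_blank
    then show ?thesis
      using tape sc keep i' letters_move_blank[OF tape(2)] sim_tape_inner[OF tape] unfolding sim_inv_def by auto
  next
    case (back_letter a)
    then have "scanned w p (last_n K (b @ [a])) (letters (take (Suc i) tp)) (letters (drop (Suc i) tp))"
      using sc letters_move_letter[OF tape(2)] scanned_letter by simp
    then show ?thesis
      using back_letter tape keep i' sim_tape_inner[OF tape] unfolding sim_inv_def by auto
  next
    case back_end
    then have "i = length tp - 1" "0 < i" using sim_tape_rmark[OF tape] by auto
    then have "scanned w p b (letters tp) []"
      using sc letters_sim_tape_ends[OF tape(1)] by simp
    then show ?thesis
      using back_end tape keep i' \<open>0 < i\<close> scanned_jump_back unfolding sim_inv_def by auto
  qed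
qed

lemma sim_inv_step_Rewind:
  assumes inv: "sim_inv w (Rewind p, tp, i)" and step: "lba_step sim_lba (Rewind p, tp, i) (s', tp', i')"
  shows "sim_inv w (s', tp', i')"
proof -
  have tape: "sim_tape tp" "i < length tp" and reach: "grl_reach w ([], p, letters tp)"
    using inv unfolding sim_inv_def by auto
  obtain c d where delta: "(Rewind p, tp ! i, s', c, d) \<in> sim_delta" and tp': "tp' = tp[i := c]"
    and keep: "c = tp ! i \<Longrightarrow> tp' = tp"
    and i': "d = 1 \<Longrightarrow> i' = Suc i" "d = 0 \<Longrightarrow> i' = i" "d = -1 \<Longrightarrow> i' = i - 1"
    using sim_lba_stepE[OF step] by metis
  from delta show ?thesis
  proof (cases rule: sim_delta.cases)
    case rewind_blank
    then show ?thesis using tape reach keep i' sim_tape_inner[OF tape] unfolding sim_inv_def by auto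
  next
    case rewind_letter
    then show ?thesis using tape reach keep i' sim_tape_inner[OF tape] unfolding sim_inv_def by auto
  next
    case rewind_end
    then have "i = 0" using sim_tape_lmark[OF tape] by simp
    then show ?thesis
      using rewind_end tape reach keep i' sim_tape_length[OF tape(1)] letters_sim_tape_ends[OF tape(1)]
      unfolding sim_inv_def by auto
  qed
qed

lemma sim_inv_step_CheckRight:
  assumes inv: "sim_inv w (CheckRight, tp, i)" and step: "lba_step sim_lba (CheckRight, tp, i) (s', tp', i')"
  shows "sim_inv w (s', tp', i')"
proof -
  have tape: "sim_tape tp" "i < length tp"
    and reach: "\<exists>qf \<in> finals A. grl_reach w (letters (take i tp), qf, letters (drop i tp))"
    using inv unfolding sim_inv_def by auto
  obtain c d where delta: "(CheckRight, tp ! i, s', c, d) \<in> sim_delta" and tp': "tp' = tp[i := c]"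
    and keep: "c = tp ! i \<Longrightarrow> tp' = tp"
    and i': "d = 1 \<Longrightarrow> i' = Suc i" "d = 0 \<Longrightarrow> i' = i" "d = -1 \<Longrightarrow> i' = i - 1"
    using sim_lba_stepE[OF step] by metis
  from delta show ?thesis
  proof (cases rule: sim_delta.cases)
    case check_right_blank
    then show ?thesis
      using tape reach keep i' letters_move_blank[OF tape(2)] sim_tape_inner[OF tape] unfolding sim_inv_def by auto
  next
    case check_right_end
    then have "i = length tp - 1" "Suc (i - 1) = i" using sim_tape_rmark[OF tape] by auto
    then show ?thesis
      using check_right_end tape reach keep i' letters_sim_tape_ends[OF tape(1)] unfolding sim_inv_def by auto
  qed
qed

lemma sim_inv_step_CheckLeft:
  assumes inv: "sim_inv w (CheckLeft, tp, i)" and step: "lba_step sim_lba (CheckLeft, tp, i) (s', tp', i')"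
  shows "sim_inv w (s', tp', i')"
proof -
  have tape: "sim_tape tp" "i < length tp" and reach: "\<exists>qf \<in> finals A. grl_reach w (letters tp, qf, [])"
    and rest: "letters (drop (Suc i) tp) = []"
    using inv unfolding sim_inv_def by auto
  obtain c d where delta: "(CheckLeft, tp ! i, s', c, d) \<in> sim_delta" and tp': "tp' = tp[i := c]"
    and keep: "c = tp ! i \<Longrightarrow> tp' = tp"
    and i': "d = 1 \<Longrightarrow> i' = Suc i" "d = 0 \<Longrightarrow> i' = i" "d = -1 \<Longrightarrow> i' = i - 1"
    using sim_lba_stepE[OF step] by metis
  from delta show ?thesis
  proof (cases rule: sim_delta.cases)
    case check_left_blank
    then have "0 < i" "letters (drop i tp) = []"
      using sim_tape_inner[OF tape] letters_move_blank[OF tape(2)] rest by auto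
    then show ?thesis using check_left_blank tape reach keep i' unfolding sim_inv_def by auto
  next
    case check_left_end
    then have "i = 0" using sim_tape_lmark[OF tape] by simp
    then have "letters tp = []" using rest letters_sim_tape_ends[OF tape(1)] by simp
    then show ?thesis using check_left_end tape reach keep i' unfolding sim_inv_def by auto
  qed
qed

lemma sim_inv_step:
  assumes "sim_inv w c" "lba_step sim_lba c c'"
  shows "sim_inv w c'"
proof -
  obtain s tp i s' tp' i' where c: "c = (s, tp, i)" "c' = (s', tp', i')" by (cases c, cases c')
  have "s \<noteq> Accept" using assms(2) c by (auto elim!: sim_lba_stepE sim_delta.cases)
  then show ?thesis
    using assms unfolding c
    by (cases s) (auto intro: sim_inv_step_Start sim_inv_step_Main sim_inv_step_Scan sim_inv_step_Delete
        sim_inv_step_ScanBack sim_inv_step_Rewind sim_inv_step_CheckRight sim_inv_step_CheckLeft)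
qed

lemma L_LBA_sim_lba_subset: "L_LBA sim_lba \<subseteq> L_GRL A"
proof
  fix w assume "w \<in> L_LBA sim_lba"
  then obtain tp i where w: "w \<in> lists (alph A)"
    and run: "(lba_step sim_lba)\<^sup>*\<^sup>* (Start, [lmark] @ map Inl w @ [rmark], 0) (Accept, tp, i)"
    unfolding L_LBA_def by (auto simp: sim_lba_def)
  have "sim_inv w (Start, [lmark] @ map Inl w @ [rmark], 0)"
    unfolding sim_inv_def using sim_tape_initial[OF w] by simp
  with run have "sim_inv w (Accept, tp, i)"
    by (induction rule: rtranclp_induct) (auto intro: sim_inv_step)
  then show "w \<in> L_GRL A" unfolding L_GRL_def sim_inv_def using w by auto
qed

lemma sim_symbols_simps [simp]:
  "Inr k \<in> sim_symbols \<longleftrightarrow> k \<le> 2" "Inl a \<in> sim_symbols \<longleftrightarrow> a \<in> alph A"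
  unfolding sim_symbols_def by auto

lemma sim_lba_deltaI:
  assumes "(s, c, s', c', d) \<in> sim_delta" "valid_sim_state s" "valid_sim_state s'"
    "c \<in> sim_symbols" "c' \<in> sim_symbols"
  shows "(s, c, s', c', d) \<in> lba_delta sim_lba"
proof -
  have "d \<in> {-1, 0, 1}" using assms(1) by (cases rule: sim_delta.cases) auto
  with assms show ?thesis unfolding sim_lba_def by simp
qed

definition represents :: "('a + nat) list \<Rightarrow> nat \<Rightarrow> 'a list \<Rightarrow> 'a list \<Rightarrow> bool" where
  "represents tp i t y \<longleftrightarrow> sim_tape tp \<and> 0 < i \<and> i < length tp \<and> letters (take i tp) = t \<and> letters (drop i tp) = y"

lemma sim_run_right_blanks:
  assumes "(S, blank, S, blank, 1) \<in> lba_delta sim_lba"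
    and "sim_tape tp" "0 < i" "i < length tp" "letters (drop i tp) = []"
  shows "(lba_step sim_lba)\<^sup>*\<^sup>* (S, tp, i) (S, tp, length tp - 1)"
  using assms(2-)
proof (induction "length tp - i" arbitrary: i)
  case (Suc k)
  show ?case
  proof (rule sim_tape_nth[OF Suc(3) Suc(5)])
    assume "0 < i" "i < length tp - 1" "tp ! i = blank"
    then have "lba_step sim_lba (S, tp, i) (S, tp, Suc i)"
      using assms(1) by (intro lba_step_right_read) auto
    moreover have "(lba_step sim_lba)\<^sup>*\<^sup>* (S, tp, Suc i) (S, tp, length tp - 1)"
      using Suc letters_move_blank[of i tp 0] \<open>tp ! i = blank\<close> \<open>i < length tp - 1\<close> by auto
    ultimately show ?thesis by (rule converse_rtranclp_into_rtranclp)
  next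
    fix a assume "tp ! i = Inl a"
    then show ?thesis using letters_move_letter[OF Suc(5)] Suc(6) by simp
  qed (use Suc in auto)
qed simp

lemma all_blank_if_no_letters:
  assumes "sim_tape tp" "letters tp = []" "0 < k" "k < length tp - 1"
  shows "tp ! k = blank"
proof (rule sim_tape_nth[OF assms(1), of k])
  fix a assume "tp ! k = Inl a"
  then show ?thesis
    using letters_move_letter[of k tp a] letters_take_drop[of tp k] assms(2,4) by simp
qed (use assms in auto)

lemma represents_blank:
  assumes "represents tp i t y" "tp ! i = blank"
  shows "represents tp (Suc i) t y"
  using assms sim_tape_inner[of tp i] letters_move_blank[of i tp 0] unfolding represents_def by auto

lemma represents_letter:
  assumes "represents tp i t (a' # y)" "tp ! i = Inl a"
  shows "a = a' \<and> a \<in> alph A \<and> represents tp (Suc i) (t @ [a]) y"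
proof -
  have tape: "sim_tape tp" "i < length tp" using assms(1) unfolding represents_def by auto
  have "i < length tp - 1" using sim_tape_inner[OF tape] assms(2) by simp
  moreover have "a \<in> alph A" using sim_tape_letter[OF tape assms(2)] .
  ultimately show ?thesis
    using assms letters_move_letter[OF tape(2) assms(2)] unfolding represents_def by auto
qed

lemma represents_Cons_cell:
  assumes "represents tp i t (a # y)"
  obtains "tp ! i = blank" | c where "tp ! i = Inl c"
proof -
  have tape: "sim_tape tp" "i < length tp" "0 < i" and y: "letters (drop i tp) = a # y"
    using assms unfolding represents_def by auto
  show ?thesis
  proof (rule sim_tape_nth[OF tape(1,2)])
    assume "i = length tp - 1"
    then show ?thesis using y letters_sim_tape_ends(4)[OF tape(1)] by simp
  qed (use tape that in auto)
qed

lemma sim_scan_run: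
  assumes blank: "\<And>b. b \<in> windows \<Longrightarrow> (S b, blank, S b, blank, 1) \<in> lba_delta sim_lba"
    and letter: "\<And>b a. b \<in> windows \<Longrightarrow> a \<in> alph A \<Longrightarrow> window_ok p b a \<Longrightarrow>
      (S b, Inl a, S (last_n K (b @ [a])), Inl a, 1) \<in> lba_delta sim_lba"
    and "represents tp i t (u @ z)" "no_subword_in (pre @ u) (Sigma_p A p)" "set pre \<subseteq> alph A"
  shows "\<exists>j. represents tp j (t @ u) z \<and>
    (lba_step sim_lba)\<^sup>*\<^sup>* (S (last_n K pre), tp, i) (S (last_n K (pre @ u)), tp, j)"
  using assms(3-)
proof (induction "length tp - i" arbitrary: i t u pre)
  case 0
  then show ?case by (simp add: represents_def)
next
  case (Suc k)
  have k: "k = length tp - Suc i" using Suc(2) by arith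
  have window: "last_n K pre \<in> windows" using last_n_in_windows[OF Suc.prems(3)] .
  show ?case
  proof (cases u)
    case Nil
    then show ?thesis using Suc.prems(1) by auto
  next
    case (Cons a u')
    show ?thesis
    proof (rule represents_Cons_cell[OF Suc.prems(1)[unfolded Cons append_Cons]])
      assume "tp ! i = blank"
      then have "represents tp (Suc i) t (u @ z)" using represents_blank Suc.prems(1) by blast
      moreover have "lba_step sim_lba (S (last_n K pre), tp, i) (S (last_n K pre), tp, Suc i)"
        using blank[OF window] \<open>tp ! i = blank\<close> calculation unfolding represents_def
        by (intro lba_step_right_read) auto
      moreover obtain j where "represents tp j (t @ u) z"
        "(lba_step sim_lba)\<^sup>*\<^sup>* (S (last_n K pre), tp, Suc i) (S (last_n K (pre @ u)), tp, j)"
        using Suc(1)[OF k \<open>represents tp (Suc i) t (u @ z)\<close> Suc.prems(2,3)] by blast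
      ultimately show ?thesis by (blast intro: converse_rtranclp_into_rtranclp)
    next
      fix c assume "tp ! i = Inl c"
      then have "c = a" "a \<in> alph A" and rep: "represents tp (Suc i) (t @ [a]) (u' @ z)"
        using represents_letter Suc.prems(1) Cons by auto
      have "no_subword_in (pre @ [a]) (Sigma_p A p)"
        using Suc.prems(2) Cons no_subword_in_appendD[of "pre @ [a]" u'] by simp
      then have "window_ok p (last_n K pre) a"
        using window_ok_iff no_subword_in_appendD Suc.prems(2) by blast
      then have "lba_step sim_lba (S (last_n K pre), tp, i) (S (last_n K (pre @ [a])), tp, Suc i)"
        using letter[OF window \<open>a \<in> alph A\<close>] \<open>tp ! i = Inl c\<close> \<open>c = a\<close> rep
          last_n_last_n_append[of K pre "[a]"] unfolding represents_def
        by (intro lba_step_right_read) auto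
      moreover obtain j where "represents tp j ((t @ [a]) @ u') z"
        "(lba_step sim_lba)\<^sup>*\<^sup>* (S (last_n K (pre @ [a])), tp, Suc i) (S (last_n K ((pre @ [a]) @ u')), tp, j)"
        using Suc(1)[OF k rep, of "pre @ [a]"] Suc.prems(2,3) Cons \<open>a \<in> alph A\<close> by auto
      ultimately show ?thesis using Cons by (auto intro: converse_rtranclp_into_rtranclp)
    qed
  qed
qed

lemma sim_delete_run:
  assumes "represents tp j t (x @ v)" "x \<noteq> []" "x \<in> windows" "q \<in> states A"
  shows "\<exists>tp' j'. (lba_step sim_lba)\<^sup>*\<^sup>* (Delete x q, tp, j) (Main q, tp', j') \<and> represents tp' j' t v"
  using assms
proof (induction "length tp - j" arbitrary: j x tp)
  case 0
  then show ?case by (simp add: represents_def)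
next
  case (Suc k)
  obtain a x' where x: "x = a # x'" using Suc.prems(2) by (cases x) auto
  have k: "k = length tp - Suc j" using Suc(2) by arith
  have valid: "valid_sim_state (Delete x q)" using Suc.prems(3,4) by simp
  show ?case
  proof (rule represents_Cons_cell[OF Suc.prems(1)[unfolded x append_Cons]])
    assume "tp ! j = blank"
    then have "represents tp (Suc j) t (x @ v)" using represents_blank Suc.prems(1) by blast
    moreover have "lba_step sim_lba (Delete x q, tp, j) (Delete x q, tp, Suc j)"
      using sim_lba_deltaI[OF delete_blank valid valid] \<open>tp ! j = blank\<close> calculation
      unfolding represents_def by (intro lba_step_right_read) auto
    moreover obtain tp' j' where "(lba_step sim_lba)\<^sup>*\<^sup>* (Delete x q, tp, Suc j) (Main q, tp', j')"
      "represents tp' j' t v"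
      using Suc(1)[OF k \<open>represents tp (Suc j) t (x @ v)\<close> Suc.prems(2-4)] by blast
    ultimately show ?thesis by (blast intro: converse_rtranclp_into_rtranclp)
  next
    fix c assume "tp ! j = Inl c"
    then have "c = a" "a \<in> alph A" and rep: "represents tp (Suc j) (t @ [a]) (x' @ v)"
      using represents_letter Suc.prems(1) x by auto
    define tp1 where "tp1 = tp[j := blank]"
    define s' where "s' = (if x' = [] then Main q else Delete x' q)"
    have tape: "sim_tape tp" "j < length tp" using Suc.prems(1) unfolding represents_def by auto
    have "x' \<in> windows" using Suc.prems(3) x unfolding windows_def by auto
    then have "valid_sim_state s'" unfolding s'_def using Suc.prems(4) by simp
    then have "lba_step sim_lba (Delete x q, tp, j) (s', tp1, Suc j)"
      using sim_lba_deltaI[OF delete_letter] valid \<open>tp ! j = Inl c\<close> \<open>c = a\<close> \<open>a \<in> alph A\<close> rep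
      unfolding tp1_def s'_def x represents_def by (intro lba_step_right) auto
    moreover have "represents tp1 (Suc j) t (x' @ v)"
    proof -
      have "take (Suc j) tp1 = take j tp @ [blank]"
        unfolding tp1_def using tape(2) by (simp add: take_Suc_conv_app_nth take_update_cancel)
      then show ?thesis
        using sim_tape_erase[OF tape(1) \<open>tp ! j = Inl c\<close> tape(2)] rep Suc.prems(1)
        unfolding represents_def tp1_def by auto
    qed
    ultimately show ?thesis
    proof (cases "x' = []")
      case False
      have "k = length tp1 - Suc j" using k unfolding tp1_def by simp
      then obtain tp' j' where "(lba_step sim_lba)\<^sup>*\<^sup>* (Delete x' q, tp1, Suc j) (Main q, tp', j')"
        "represents tp' j' t v"
        using Suc(1) \<open>represents tp1 (Suc j) t (x' @ v)\<close> False \<open>x' \<in> windows\<close> Suc.prems(4) by blast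
      with \<open>lba_step sim_lba (Delete x q, tp, j) (s', tp1, Suc j)\<close> False show ?thesis
        unfolding s'_def by (auto intro: converse_rtranclp_into_rtranclp)
    qed (auto simp: s'_def)
  qed
qed

lemma sim_simulates_delete:
  assumes rule: "(p, x, q) \<in> rules A" and u: "no_subword_in u (Sigma_p A p)" "\<not> overlaps u x"
    and rep: "represents tp i t (u @ x @ v)" and p: "p \<in> states A"
  shows "\<exists>tp' i'. (lba_step sim_lba)\<^sup>*\<^sup>* (Main p, tp, i) (Main q, tp', i') \<and> represents tp' i' (t @ u) v"
proof -
  have tape: "sim_tape tp" "i < length tp" using rep unfolding represents_def by auto
  have x: "x \<noteq> []" "q \<in> states A" "x \<in> windows"
    using rule_wf[OF wf rule] rule_in_windows[OF rule] by auto
  have "set u \<subseteq> alph A"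
    using letters_drop_sim_tape[OF tape(1), of i] rep unfolding represents_def by auto
  then have valid: "valid_sim_state (Scan p x q b)" if "b = [] \<or> b = last_n K u" for b
    using that rule last_n_in_windows[OF \<open>set u \<subseteq> alph A\<close>] by (auto simp: windows_def)
  have start: "lba_step sim_lba (Main p, tp, i) (Scan p x q [], tp, i)"
    using sim_lba_deltaI[OF choose_delete[OF rule] _ valid] p sim_tape_symbols[OF tape] tape(2)
    by (intro lba_step_stay_read) auto
  have "(Scan p x q b, blank, Scan p x q b, blank, 1) \<in> lba_delta sim_lba" if "b \<in> windows" for b
    by (rule sim_lba_deltaI[OF scan_blank]) (use rule that in auto)
  moreover have "(Scan p x q b, Inl a, Scan p x q (last_n K (b @ [a])), Inl a, 1) \<in> lba_delta sim_lba"
    if "b \<in> windows" "a \<in> alph A" "window_ok p b a" for b a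
    by (rule sim_lba_deltaI[OF scan_letter]) (use rule that last_n_in_windows[of "b @ [a]"] in \<open>auto simp: windows_def\<close>)
  ultimately obtain j where j: "represents tp j (t @ u) (x @ v)"
    and scan: "(lba_step sim_lba)\<^sup>*\<^sup>* (Scan p x q [], tp, i) (Scan p x q (last_n K u), tp, j)"
    using sim_scan_run[where S = "Scan p x q" and pre = "[]", OF _ _ rep] u by fastforce
  have stop: "lba_step sim_lba (Scan p x q (last_n K u), tp, j) (Delete x q, tp, j)"
    using sim_lba_deltaI[OF end_scan valid] j sim_tape_symbols[of tp j] u(2) x
      overlaps_last_n[OF rule_length_le_max[OF wf rule]]
    by (intro lba_step_stay_read) (auto simp: represents_def)
  obtain tp' i' where delete: "(lba_step sim_lba)\<^sup>*\<^sup>* (Delete x q, tp, j) (Main q, tp', i')"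
    and "represents tp' i' (t @ u) v"
    using sim_delete_run[OF j x(1,3,2)] by blast
  moreover have "(lba_step sim_lba)\<^sup>*\<^sup>* (Main p, tp, i) (Main q, tp', i')"
    using start scan stop delete by (meson converse_rtranclp_into_rtranclp rtranclp_trans)
  ultimately show ?thesis by blast
qed

lemma sim_rewind_run:
  assumes tape: "sim_tape tp" and p: "p \<in> states A"
  shows "(lba_step sim_lba)\<^sup>*\<^sup>* (Rewind p, tp, length tp - 2) (Main p, tp, 1)"
proof -
  have len: "length tp \<ge> 2" using sim_tape_length[OF tape] .
  have "(lba_step sim_lba)\<^sup>*\<^sup>* (Rewind p, tp, length tp - 2) (Rewind p, tp, 0)"
  proof (rule lba_run_left)
    fix k assume k: "0 < k" "k \<le> length tp - 2"
    then have "k < length tp" using len by simp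
    then show "(Rewind p, tp ! k, Rewind p, tp ! k, -1) \<in> lba_delta sim_lba"
    proof (rule sim_tape_nth[OF tape])
      assume "tp ! k = blank"
      moreover have "(Rewind p, blank, Rewind p, blank, -1) \<in> lba_delta sim_lba"
        by (rule sim_lba_deltaI[OF rewind_blank]) (use p in auto)
      ultimately show ?thesis by simp
    next
      fix a assume "a \<in> alph A" "tp ! k = Inl a"
      moreover have "(Rewind p, Inl a, Rewind p, Inl a, -1) \<in> lba_delta sim_lba"
        by (rule sim_lba_deltaI[OF rewind_letter]) (use p \<open>a \<in> alph A\<close> in auto)
      ultimately show ?thesis by simp
    qed (use k in auto)
  qed (use len in simp)
  also have "(Rewind p, lmark, Main p, lmark, 1) \<in> lba_delta sim_lba"
    by (rule sim_lba_deltaI[OF rewind_end]) (use p in auto)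
  then have "lba_step sim_lba (Rewind p, tp, 0) (Main p, tp, 1)"
    using sim_tape_ends[OF tape] len lba_step_right_read[of 0 tp "Rewind p" "Main p" sim_lba] by simp
  finally show ?thesis .
qed

lemma sim_step_at_rmark:
  assumes "sim_tape tp" "(s, rmark, s', rmark, -1) \<in> lba_delta sim_lba"
  shows "lba_step sim_lba (s, tp, length tp - 1) (s', tp, length tp - 2)"
proof -
  obtain k where k: "length tp = Suc (Suc k)"
    using sim_tape_length[OF assms(1)] by (metis add_2_eq_Suc le_Suc_ex)
  have "lba_step sim_lba (s, tp, Suc k) (s', tp, k)"
    using assms sim_tape_ends[OF assms(1)] k by (intro lba_step_left_read) auto
  with k show ?thesis by simp
qed

lemma sim_simulates_jump_back:
  assumes y: "no_subword_in y (Sigma_p A p)" and rep: "represents tp i t y" and p: "p \<in> states A"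
  shows "(lba_step sim_lba)\<^sup>*\<^sup>* (Main p, tp, i) (Main p, tp, 1) \<and> represents tp 1 [] (t @ y)"
proof -
  have tape: "sim_tape tp" "i < length tp" using rep unfolding represents_def by auto
  have len: "length tp \<ge> 2" using sim_tape_length[OF tape(1)] .
  have "set y \<subseteq> alph A"
    using letters_drop_sim_tape[OF tape(1), of i] rep unfolding represents_def by auto
  have blank: "(ScanBack p b, blank, ScanBack p b, blank, 1) \<in> lba_delta sim_lba" if "b \<in> windows" for b
    by (rule sim_lba_deltaI[OF back_blank]) (use p that in auto)
  have letter: "(ScanBack p b, Inl a, ScanBack p (last_n K (b @ [a])), Inl a, 1) \<in> lba_delta sim_lba"
    if "b \<in> windows" "a \<in> alph A" "window_ok p b a" for b a
    by (rule sim_lba_deltaI[OF back_letter]) (use p that last_n_in_windows[of "b @ [a]"] in \<open>auto simp: windows_def\<close>)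
  have "represents tp i t (y @ [])" using rep by simp
  have "\<exists>j. represents tp j (t @ y) [] \<and>
      (lba_step sim_lba)\<^sup>*\<^sup>* (ScanBack p (last_n K []), tp, i) (ScanBack p (last_n K ([] @ y)), tp, j)"
    by (rule sim_scan_run[where S = "ScanBack p", OF blank letter \<open>represents tp i t (y @ [])\<close>])
      (use y in simp_all)
  then obtain j where j: "represents tp j (t @ y) []"
    and scan: "(lba_step sim_lba)\<^sup>*\<^sup>* (ScanBack p [], tp, i) (ScanBack p (last_n K y), tp, j)"
    by auto
  have "last_n K y \<in> windows" using last_n_in_windows[OF \<open>set y \<subseteq> alph A\<close>] .
  have j': "sim_tape tp" "0 < j" "j < length tp" "letters (drop j tp) = []" "letters (take j tp) = t @ y"
    using j unfolding represents_def by auto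
  have "(Main p, c, ScanBack p [], c, 0) \<in> lba_delta sim_lba" if "c \<in> sim_symbols" for c
    by (rule sim_lba_deltaI[OF choose_jump]) (use p that in \<open>auto simp: windows_def\<close>)
  then have "lba_step sim_lba (Main p, tp, i) (ScanBack p [], tp, i)"
    using sim_tape_symbols[OF tape] tape(2) by (intro lba_step_stay_read) auto
  moreover have "(lba_step sim_lba)\<^sup>*\<^sup>* (ScanBack p (last_n K y), tp, j) (ScanBack p (last_n K y), tp, length tp - 1)"
    by (rule sim_run_right_blanks[OF blank[OF \<open>last_n K y \<in> windows\<close>] j'(1-4)])
  moreover have "lba_step sim_lba (ScanBack p (last_n K y), tp, length tp - 1) (Rewind p, tp, length tp - 2)"
    by (rule sim_step_at_rmark[OF tape(1) sim_lba_deltaI[OF back_end]])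
      (use p \<open>last_n K y \<in> windows\<close> in auto)
  ultimately have "(lba_step sim_lba)\<^sup>*\<^sup>* (Main p, tp, i) (Rewind p, tp, length tp - 2)"
    using scan by (meson converse_rtranclp_into_rtranclp rtranclp.rtrancl_into_rtrancl rtranclp_trans)
  then have "(lba_step sim_lba)\<^sup>*\<^sup>* (Main p, tp, i) (Main p, tp, 1)"
    using sim_rewind_run[OF tape(1) p] by (rule rtranclp_trans)
  moreover have "letters (take 1 tp) = []" "letters (drop 1 tp) = t @ y"
    using letters_sim_tape_ends(1,2)[OF tape(1)] letters_take_drop[of tp j] j'(4,5) by simp_all
  then have "represents tp 1 [] (t @ y)"
    using tape(1) len unfolding represents_def by simp
  ultimately show ?thesis by blast
qed

lemma sim_simulates_move:
  assumes "grl_move A (t, p, y) (t', p', y')" and rep: "represents tp i t y" and p: "p \<in> states A"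
  shows "\<exists>tp' i'. (lba_step sim_lba)\<^sup>*\<^sup>* (Main p, tp, i) (Main p', tp', i') \<and> represents tp' i' t' y' \<and>
    p' \<in> states A"
  using assms(1) unfolding grl_move_iff
proof (elim disjE exE conjE)
  fix x q u v
  assume rule: "(p, x, q) \<in> rules A" and u: "no_subword_in u (Sigma_p A p)" "\<not> overlaps u x"
    and moved: "y = u @ x @ v" "t' = t @ u" "p' = q" "y' = v"
  obtain tp' i' where "(lba_step sim_lba)\<^sup>*\<^sup>* (Main p, tp, i) (Main q, tp', i')" "represents tp' i' (t @ u) v"
    using sim_simulates_delete[OF rule u] rep p moved(1) by blast
  then show ?thesis using moved rule_wf(2)[OF wf rule] by blast
next
  assume "no_subword_in y (Sigma_p A p)" "t' = []" "p' = p" "y' = t @ y"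
  then show ?thesis using sim_simulates_jump_back[OF _ rep p] p by blast
qed

lemma sim_simulates_run:
  assumes "(grl_move A)\<^sup>*\<^sup>* ([], init A, w) c" "w \<in> lists (alph A)"
  shows "\<exists>tp i. (lba_step sim_lba)\<^sup>*\<^sup>* (Start, [lmark] @ map Inl w @ [rmark], 0) (Main (fst (snd c)), tp, i) \<and>
    represents tp i (fst c) (snd (snd c)) \<and> fst (snd c) \<in> states A"
  using assms(1)
proof (induction rule: rtranclp_induct)
  case base
  let ?tp = "[lmark] @ map Inl w @ [rmark]"
  have "init A \<in> states A" using wf unfolding wf_grlowjfa_def by blast
  then have "(Start, lmark, Main (init A), lmark, 1) \<in> lba_delta sim_lba"
    by (intro sim_lba_deltaI[OF start]) auto
  then have "lba_step sim_lba (Start, ?tp, 0) (Main (init A), ?tp, Suc 0)"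
    by (intro lba_step_right_read) auto
  moreover have "represents ?tp (Suc 0) [] w"
    unfolding represents_def using sim_tape_initial[OF assms(2)] by auto
  ultimately show ?case using \<open>init A \<in> states A\<close> by auto
next
  case (step c c')
  obtain t p y t' p' y' where c: "c = (t, p, y)" "c' = (t', p', y')" by (cases c, cases c')
  obtain tp i where run: "(lba_step sim_lba)\<^sup>*\<^sup>* (Start, [lmark] @ map Inl w @ [rmark], 0) (Main p, tp, i)"
    and "represents tp i t y" "p \<in> states A"
    using step.IH c by auto
  then obtain tp' i' where "(lba_step sim_lba)\<^sup>*\<^sup>* (Main p, tp, i) (Main p', tp', i')"
    "represents tp' i' t' y'" "p' \<in> states A"
    using sim_simulates_move step.hyps(2) c by blast
  then show ?case using run c by (auto intro: rtranclp_trans)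
qed

lemma sim_accept_run:
  assumes rep: "represents tp i [] []" and qf: "qf \<in> finals A"
  shows "(lba_step sim_lba)\<^sup>*\<^sup>* (Main qf, tp, i) (Accept, tp, 0)"
proof -
  have tape: "sim_tape tp" "0 < i" "i < length tp" and empty: "letters tp = []"
    using rep letters_take_drop[of tp i] unfolding represents_def by auto
  have len: "length tp \<ge> 2" using sim_tape_length[OF tape(1)] .
  have "qf \<in> states A" using qf wf unfolding wf_grlowjfa_def by blast
  have "(Main qf, c, CheckRight, c, 0) \<in> lba_delta sim_lba" if "c \<in> sim_symbols" for c
    by (rule sim_lba_deltaI[OF choose_accept[OF qf]]) (use \<open>qf \<in> states A\<close> that in auto)
  then have "lba_step sim_lba (Main qf, tp, i) (CheckRight, tp, i)"
    using sim_tape_symbols[OF tape(1,3)] tape(3) by (intro lba_step_stay_read) auto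
  also have "(lba_step sim_lba)\<^sup>*\<^sup>* (CheckRight, tp, i) (CheckRight, tp, length tp - 1)"
    using sim_run_right_blanks[OF sim_lba_deltaI[OF check_right_blank]] tape rep
    unfolding represents_def by simp
  also have "lba_step sim_lba \<dots> (CheckLeft, tp, length tp - 2)"
    by (rule sim_step_at_rmark[OF tape(1) sim_lba_deltaI[OF check_right_end]]) auto
  also have "(lba_step sim_lba)\<^sup>*\<^sup>* \<dots> (CheckLeft, tp, 0)"
  proof (rule lba_run_left)
    fix k assume "0 < k" "k \<le> length tp - 2"
    then have "tp ! k = blank" using all_blank_if_no_letters[OF tape(1) empty] len by simp
    moreover have "(CheckLeft, blank, CheckLeft, blank, -1) \<in> lba_delta sim_lba"
      by (rule sim_lba_deltaI[OF check_left_blank]) auto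
    ultimately show "(CheckLeft, tp ! k, CheckLeft, tp ! k, -1) \<in> lba_delta sim_lba" by simp
  qed (use len in simp)
  also have "(CheckLeft, lmark, Accept, lmark, 0) \<in> lba_delta sim_lba"
    by (rule sim_lba_deltaI[OF check_left_end]) auto
  then have "lba_step sim_lba (CheckLeft, tp, 0) (Accept, tp, 0)"
    using sim_tape_ends[OF tape(1)] len by (intro lba_step_stay_read) auto
  finally show ?thesis .
qed

lemma L_LBA_sim_lba: "L_LBA sim_lba = L_GRL A"
proof
  show "L_GRL A \<subseteq> L_LBA sim_lba"
  proof
    fix w assume "w \<in> L_GRL A"
    then obtain qf where w: "w \<in> lists (alph A)" "qf \<in> finals A" "(grl_move A)\<^sup>*\<^sup>* ([], init A, w) ([], qf, [])"
      unfolding L_GRL_def by blast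
    obtain tp i where "(lba_step sim_lba)\<^sup>*\<^sup>* (Start, [lmark] @ map Inl w @ [rmark], 0) (Main qf, tp, i)"
      and "represents tp i [] []"
      using sim_simulates_run[OF w(3,1)] by auto
    then have "(lba_step sim_lba)\<^sup>*\<^sup>* (Start, [lmark] @ map Inl w @ [rmark], 0) (Accept, tp, 0)"
      using sim_accept_run[OF _ w(2)] by (auto intro: rtranclp_trans)
    then show "w \<in> L_LBA sim_lba" unfolding L_LBA_def using w(1) by (auto simp: sim_lba_def)
  qed
qed (rule L_LBA_sim_lba_subset)

end

lemma GRLOWJ_subset_CS: "(GRLOWJ :: 'a :: countable list set set) \<subseteq> CS"
proof
  fix L :: "'a list set"
  assume "L \<in> GRLOWJ"
  then obtain A :: "('a, nat) grlowjfa" where "wf_grlowjfa A" "L = L_GRL A"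
    unfolding GRLOWJ_def by blast
  then interpret grlowjfa_simulation A by unfold_locales
  show "L \<in> CS" using L_LBA_in_CS[OF wf_sim_lba] L_LBA_sim_lba \<open>L = L_GRL A\<close> by simp
qed

theorem proposition5:
  shows "(GRLOWJ :: nat list set set) \<subset> CS"
  using GRLOWJ_subset_CS powers_of_two_CS powers_of_two_not_GRLOWJ by blast

end
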